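(* For any unital associative algebra $\mathcal{A}$, its $*$-double $\mathcal{D}(\mathcal{A})$ contains no non-scalar unitary, no non-scalar projection and no non-scalar partial isometry (i.e. every such element is a scalar multiple of the unit).
   Context: All algebras are complex and unital. For a unital associative algebra $\mathcal{A}$, $\mathcal{A}^*$ is an associative algebra with an additive, conjugate-linear, anti-multiplicative bijection $\phi:\mathcal{A}\to\mathcal{A}^*$. The $*$-double $\mathcal{D}(\mathcal{A})$ is the unital free product $\mathcal{A}*\mathcal{A}^*$ of associative algebras with involution determined by $a^*=\phi(a)$ for $a\in\mathcal{A}$ and $b^*=\phi^{-1}(b)$ for $b\in\mathcal{A}^*$. In a $*$-algebra with unit $e$: $u$ is unitary if $u^*u=uu^*=e$; $p$ is a projection if $p=p^*=p^2$; $v$ is a partial isometry if $v^*v$ is a projection. *)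

theory Defs
  imports Complex_Main
begin

text \<open>A unital associative complex algebra: a type with ring structure and a unit
(classes ring, monoid_mult; 0 = 1 is allowed), together with an explicit complex
scalar multiplication making it a complex vector space, bilinear w.r.t. the product.\<close>

definition cplx_alg :: "(complex \<Rightarrow> 'a::{ring,monoid_mult} \<Rightarrow> 'a) \<Rightarrow> bool" where
  "cplx_alg s \<longleftrightarrow>
     (\<forall>c x y. s c (x + y) = s c x + s c y) \<and>
     (\<forall>c d x. s (c + d) x = s c x + s d x) \<and>
     (\<forall>c d x. s (c * d) x = s c (s d x)) \<and>
     (\<forall>x. s 1 x = x) \<and>
     (\<forall>c x y. s c (x * y) = s c x * y) \<and>
     (\<forall>c x y. s c (x * y) = x * s c y)"

datatype ('a, 'b) fterm =
    GenA 'a | GenB 'b | One | Zero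
  | Add "('a, 'b) fterm" "('a, 'b) fterm"
  | Mul "('a, 'b) fterm" "('a, 'b) fterm"
  | Smul complex "('a, 'b) fterm"

text \<open>The congruence whose quotient is the unital free product A * B of unital associative
complex algebras: the axioms of a unital associative complex algebra, together with the
requirement that both generator inclusions are unital algebra homomorphisms.\<close>

inductive fcong :: "(complex \<Rightarrow> 'a::{ring,monoid_mult} \<Rightarrow> 'a) \<Rightarrow> (complex \<Rightarrow> 'b::{ring,monoid_mult} \<Rightarrow> 'b)
    \<Rightarrow> ('a, 'b) fterm \<Rightarrow> ('a, 'b) fterm \<Rightarrow> bool"
  for sA sB where
  refl: "fcong sA sB x x"
| sym: "fcong sA sB x y \<Longrightarrow> fcong sA sB y x"
| trans: "fcong sA sB x y \<Longrightarrow> fcong sA sB y z \<Longrightarrow> fcong sA sB x z"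
| cong_add: "fcong sA sB x x' \<Longrightarrow> fcong sA sB y y' \<Longrightarrow> fcong sA sB (Add x y) (Add x' y')"
| cong_mul: "fcong sA sB x x' \<Longrightarrow> fcong sA sB y y' \<Longrightarrow> fcong sA sB (Mul x y) (Mul x' y')"
| cong_smul: "fcong sA sB x x' \<Longrightarrow> fcong sA sB (Smul c x) (Smul c x')"
| add_assoc: "fcong sA sB (Add (Add x y) z) (Add x (Add y z))"
| add_comm: "fcong sA sB (Add x y) (Add y x)"
| add_zero: "fcong sA sB (Add Zero x) x"
| add_neg: "fcong sA sB (Add x (Smul (-1) x)) Zero"
| smul_add: "fcong sA sB (Smul c (Add x y)) (Add (Smul c x) (Smul c y))"
| add_smul: "fcong sA sB (Smul (c + d) x) (Add (Smul c x) (Smul d x))"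
| smul_smul: "fcong sA sB (Smul (c * d) x) (Smul c (Smul d x))"
| smul_one: "fcong sA sB (Smul 1 x) x"
| mul_assoc: "fcong sA sB (Mul (Mul x y) z) (Mul x (Mul y z))"
| one_mul: "fcong sA sB (Mul One x) x"
| mul_one: "fcong sA sB (Mul x One) x"
| distrib_left: "fcong sA sB (Mul x (Add y z)) (Add (Mul x y) (Mul x z))"
| distrib_right: "fcong sA sB (Mul (Add x y) z) (Add (Mul x z) (Mul y z))"
| smul_mul_left: "fcong sA sB (Mul (Smul c x) y) (Smul c (Mul x y))"
| smul_mul_right: "fcong sA sB (Mul x (Smul c y)) (Smul c (Mul x y))"
| genA_add: "fcong sA sB (GenA (a + a')) (Add (GenA a) (GenA a'))"
| genA_smul: "fcong sA sB (GenA (sA c a)) (Smul c (GenA a))"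
| genA_mul: "fcong sA sB (GenA (a * a')) (Mul (GenA a) (GenA a'))"
| genA_one: "fcong sA sB (GenA 1) One"
| genB_add: "fcong sA sB (GenB (b + b')) (Add (GenB b) (GenB b'))"
| genB_smul: "fcong sA sB (GenB (sB c b)) (Smul c (GenB b))"
| genB_mul: "fcong sA sB (GenB (b * b')) (Mul (GenB b) (GenB b'))"
| genB_one: "fcong sA sB (GenB 1) One"

primrec dstar :: "('a \<Rightarrow> 'b) \<Rightarrow> ('a, 'b) fterm \<Rightarrow> ('a, 'b) fterm" where
  "dstar \<phi> (GenA a) = GenB (\<phi> a)"
| "dstar \<phi> (GenB b) = GenA (inv \<phi> b)"
| "dstar \<phi> One = One"
| "dstar \<phi> Zero = Zero"
| "dstar \<phi> (Add x y) = Add (dstar \<phi> x) (dstar \<phi> y)"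
| "dstar \<phi> (Mul x y) = Mul (dstar \<phi> y) (dstar \<phi> x)"
| "dstar \<phi> (Smul c x) = Smul (cnj c) (dstar \<phi> x)"

definition anti_iso :: "(complex \<Rightarrow> 'a::{ring,monoid_mult} \<Rightarrow> 'a) \<Rightarrow> (complex \<Rightarrow> 'b::{ring,monoid_mult} \<Rightarrow> 'b)
    \<Rightarrow> ('a \<Rightarrow> 'b) \<Rightarrow> bool" where
  "anti_iso sA sB \<phi> \<longleftrightarrow> bij \<phi> \<and>
     (\<forall>x y. \<phi> (x + y) = \<phi> x + \<phi> y) \<and>
     (\<forall>c x. \<phi> (sA c x) = sB (cnj c) (\<phi> x)) \<and>
     (\<forall>x y. \<phi> (x * y) = \<phi> y * \<phi> x)"

text \<open>Notions in the *-double D(A), phrased on representatives (all respect fcong).\<close>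

definition d_unitary where
  "d_unitary sA sB \<phi> u \<longleftrightarrow> fcong sA sB (Mul (dstar \<phi> u) u) One \<and> fcong sA sB (Mul u (dstar \<phi> u)) One"

definition d_projection where
  "d_projection sA sB \<phi> p \<longleftrightarrow> fcong sA sB (dstar \<phi> p) p \<and> fcong sA sB (Mul p p) p"

definition d_partial_isometry where
  "d_partial_isometry sA sB \<phi> v \<longleftrightarrow> d_projection sA sB \<phi> (Mul (dstar \<phi> v) v)"

definition d_scalar where
  "d_scalar sA sB x \<longleftrightarrow> (\<exists>c. fcong sA sB x (Smul c One))"

end

theory Submission
  imports Defs
begin

text \<open>
  The proof builds a concrete model of the free product \<open>A * B\<close> with \<open>B = A\<^sup>*\<close>.
  Choose a basis of \<open>A\<close> containing \<open>1\<close>; the words alternating between non-unit basis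
  letters of \<open>A\<close> and their images in \<open>B\<close> index a vector space on which every term acts,
  and two congruent terms act identically.  Conversely every term is congruent to the linear
  combination of words read off from its action on the empty word, so terms acting on the
  empty word by a multiple of it are scalars.

  The involution reverses a word and swaps the sides of its letters.  If \<open>x\<close> is not a scalar,
  let \<open>w\<close> be a longest word occurring in \<open>x\<close>, with coefficient \<open>c \<noteq> 0\<close> and of length
  \<open>n \<ge> 1\<close>.  Then \<open>x\<^sup>* x\<close> has the coefficient \<open>|c|\<^sup>2\<close> on the reduced word \<open>w\<^sup>* w\<close> of length
  \<open>2n\<close>: all other products of words occurring in \<open>x\<^sup>*\<close> and \<open>x\<close> are shorter or differ from
  \<open>w\<^sup>* w\<close>.  This rules out \<open>x\<^sup>* x = x\<close>, whose words have length at most \<open>n\<close> (projections),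
  and \<open>x\<^sup>* x\<close> being a scalar (unitaries, and partial isometries since \<open>x\<^sup>* x\<close> is then a
  projection).
\<close>

declare fcong.refl [simp, intro] fcong.trans [trans]

primrec term_sum_list :: "('w \<Rightarrow> ('a, 'b) fterm) \<Rightarrow> 'w list \<Rightarrow> ('a, 'b) fterm" where
  "term_sum_list f [] = Zero"
| "term_sum_list f (w # ws) = Add (f w) (term_sum_list f ws)"

text \<open>The order of the summands is chosen arbitrarily; it does not matter modulo \<open>fcong\<close>.\<close>

definition term_sum :: "('w \<Rightarrow> ('a, 'b) fterm) \<Rightarrow> 'w set \<Rightarrow> ('a, 'b) fterm" where
  "term_sum f S = term_sum_list f (SOME ws. set ws = S \<and> distinct ws)"

lemma term_sum_list_map: "term_sum_list f (map g ws) = term_sum_list (\<lambda>w. f (g w)) ws"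
  by (induction ws) auto

lemma term_sum_empty [simp]: "term_sum f {} = Zero"
proof -
  have empty: "(SOME ws. set ws = {} \<and> distinct ws) = []" by (rule some_equality) auto
  show ?thesis unfolding term_sum_def empty by simp
qed

lemma dstar_term_sum: "dstar \<phi> (term_sum f S) = term_sum (\<lambda>w. dstar \<phi> (f w)) S"
proof -
  have "dstar \<phi> (term_sum_list f ws) = term_sum_list (\<lambda>w. dstar \<phi> (f w)) ws" for ws
    by (induction ws) auto
  then show ?thesis by (simp add: term_sum_def)
qed

locale free_product =
  fixes sA :: "complex \<Rightarrow> 'a::{ring,monoid_mult} \<Rightarrow> 'a"
    and sB :: "complex \<Rightarrow> 'b::{ring,monoid_mult} \<Rightarrow> 'b"
begin

abbreviation fcong_syntax (infix "\<approx>" 50) where "x \<approx> y \<equiv> fcong sA sB x y"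

lemma Smul_0: "Smul 0 x \<approx> Zero"
proof -
  let ?s = "Smul 0 x"
  have double: "?s \<approx> Add ?s ?s" using fcong.add_smul[of sA sB 0 0 x] by simp
  have "Zero \<approx> Add ?s (Smul (-1) ?s)" by (rule fcong.sym, rule fcong.add_neg)
  also have "\<dots> \<approx> Add (Add ?s ?s) (Smul (-1) ?s)" by (intro fcong.cong_add double fcong.refl)
  also have "\<dots> \<approx> Add ?s (Add ?s (Smul (-1) ?s))" by (rule fcong.add_assoc)
  also have "\<dots> \<approx> Add ?s Zero" by (intro fcong.cong_add fcong.refl fcong.add_neg)
  also have "\<dots> \<approx> Add Zero ?s" by (rule fcong.add_comm)
  also have "\<dots> \<approx> ?s" by (rule fcong.add_zero)
  finally show ?thesis by (rule fcong.sym)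
qed

lemma Smul_Zero: "Smul c Zero \<approx> Zero"
proof -
  have "Smul c Zero \<approx> Smul c (Smul 0 Zero)" by (intro fcong.cong_smul fcong.sym[OF Smul_0])
  also have "\<dots> \<approx> Smul (c * 0) Zero" by (rule fcong.sym, rule fcong.smul_smul)
  also have "\<dots> \<approx> Zero" using Smul_0 by simp
  finally show ?thesis .
qed

lemma Mul_Zero_left: "Mul Zero y \<approx> Zero"
proof -
  have "Mul Zero y \<approx> Mul (Smul 0 Zero) y" by (intro fcong.cong_mul fcong.sym[OF Smul_0] fcong.refl)
  also have "\<dots> \<approx> Smul 0 (Mul Zero y)" by (rule fcong.smul_mul_left)
  also have "\<dots> \<approx> Zero" by (rule Smul_0)
  finally show ?thesis .
qed

lemma Mul_Zero_right: "Mul y Zero \<approx> Zero"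
proof -
  have "Mul y Zero \<approx> Mul y (Smul 0 Zero)" by (intro fcong.cong_mul fcong.sym[OF Smul_0] fcong.refl)
  also have "\<dots> \<approx> Smul 0 (Mul y Zero)" by (rule fcong.smul_mul_right)
  also have "\<dots> \<approx> Zero" by (rule Smul_0)
  finally show ?thesis .
qed

lemma Add_Zero_right: "Add x Zero \<approx> x"
  by (rule fcong.trans[OF fcong.add_comm fcong.add_zero])

lemma Add_Add_swap: "Add (Add a b) (Add c d) \<approx> Add (Add a c) (Add b d)"
proof -
  have "Add (Add a b) (Add c d) \<approx> Add a (Add b (Add c d))" by (rule fcong.add_assoc)
  also have "\<dots> \<approx> Add a (Add (Add b c) d)" by (intro fcong.cong_add fcong.refl fcong.sym[OF fcong.add_assoc])
  also have "\<dots> \<approx> Add a (Add (Add c b) d)" by (intro fcong.cong_add fcong.refl fcong.add_comm)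
  also have "\<dots> \<approx> Add a (Add c (Add b d))" by (intro fcong.cong_add fcong.refl fcong.add_assoc)
  also have "\<dots> \<approx> Add (Add a c) (Add b d)" by (rule fcong.sym, rule fcong.add_assoc)
  finally show ?thesis .
qed

lemma term_sum_list_remove1:
  "w \<in> set ws \<Longrightarrow> term_sum_list f ws \<approx> Add (f w) (term_sum_list f (remove1 w ws))"
proof (induction ws)
  case (Cons v vs)
  show ?case
  proof (cases "w = v")
    case False
    then have "term_sum_list f (v # vs) \<approx> Add (f v) (Add (f w) (term_sum_list f (remove1 w vs)))"
      using Cons by (auto intro: fcong.cong_add)
    also have "\<dots> \<approx> Add (Add (f v) (f w)) (term_sum_list f (remove1 w vs))"
      by (rule fcong.sym, rule fcong.add_assoc)
    also have "\<dots> \<approx> Add (Add (f w) (f v)) (term_sum_list f (remove1 w vs))"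
      by (intro fcong.cong_add fcong.add_comm fcong.refl)
    also have "\<dots> \<approx> Add (f w) (Add (f v) (term_sum_list f (remove1 w vs)))" by (rule fcong.add_assoc)
    finally show ?thesis using False by simp
  qed simp
qed simp

lemma term_sum_list_perm:
  "distinct vs \<Longrightarrow> distinct ws \<Longrightarrow> set vs = set ws \<Longrightarrow> term_sum_list f vs \<approx> term_sum_list f ws"
proof (induction vs arbitrary: ws)
  case (Cons v vs)
  then have v: "v \<in> set ws" by auto
  have "term_sum_list f (remove1 v ws) \<approx> term_sum_list f vs"
    by (rule fcong.sym, rule Cons.IH) (use Cons in \<open>auto simp: set_remove1_eq\<close>)
  then have "term_sum_list f (v # vs) \<approx> Add (f v) (term_sum_list f (remove1 v ws))"
    by (simp add: fcong.cong_add fcong.sym)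
  also have "\<dots> \<approx> term_sum_list f ws" by (rule fcong.sym, rule term_sum_list_remove1[OF v])
  finally show ?case .
qed simp

lemma term_sum_eq_list: "set ws = S \<Longrightarrow> distinct ws \<Longrightarrow> term_sum f S \<approx> term_sum_list f ws"
proof -
  assume ws: "set ws = S" "distinct ws"
  then have "\<exists>ws. set ws = S \<and> distinct ws" by blast
  then have "set (SOME ws. set ws = S \<and> distinct ws) = S \<and> distinct (SOME ws. set ws = S \<and> distinct ws)"
    by (rule someI_ex)
  then show ?thesis unfolding term_sum_def using ws by (intro term_sum_list_perm) auto
qed

lemma term_sum_insert: "finite S \<Longrightarrow> w \<notin> S \<Longrightarrow> term_sum f (insert w S) \<approx> Add (f w) (term_sum f S)"
proof -
  assume "finite S" "w \<notin> S"
  then obtain ws where ws: "set ws = S" "distinct ws" using finite_distinct_list by blast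
  have "term_sum f (insert w S) \<approx> term_sum_list f (w # ws)"
    using ws \<open>w \<notin> S\<close> by (intro term_sum_eq_list) auto
  also have "\<dots> \<approx> Add (f w) (term_sum f S)"
    using term_sum_eq_list[OF ws, of f] by (simp add: fcong.cong_add fcong.sym)
  finally show ?thesis .
qed

lemma term_sum_singleton: "term_sum f {w} \<approx> f w"
proof -
  have "term_sum f {w} \<approx> Add (f w) (term_sum f {})" by (rule term_sum_insert) auto
  also have "\<dots> \<approx> f w" using Add_Zero_right by simp
  finally show ?thesis .
qed

lemma term_sum_cong: "finite S \<Longrightarrow> (\<And>w. w \<in> S \<Longrightarrow> f w \<approx> g w) \<Longrightarrow> term_sum f S \<approx> term_sum g S"
proof (induction S rule: finite_induct)
  case (insert w S)
  have "term_sum f (insert w S) \<approx> Add (f w) (term_sum f S)" by (rule term_sum_insert) fact+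
  also have "\<dots> \<approx> Add (g w) (term_sum g S)" using insert by (auto intro: fcong.cong_add)
  also have "\<dots> \<approx> term_sum g (insert w S)" by (rule fcong.sym, rule term_sum_insert) fact+
  finally show ?case .
qed simp

lemma term_sum_Add:
  "finite S \<Longrightarrow> term_sum (\<lambda>w. Add (f w) (g w)) S \<approx> Add (term_sum f S) (term_sum g S)"
proof (induction S rule: finite_induct)
  case empty then show ?case using fcong.sym[OF fcong.add_zero[of sA sB Zero]] by simp
next
  case (insert w S)
  have "term_sum (\<lambda>w. Add (f w) (g w)) (insert w S)
      \<approx> Add (Add (f w) (g w)) (term_sum (\<lambda>w. Add (f w) (g w)) S)"
    by (rule term_sum_insert) fact+
  also have "\<dots> \<approx> Add (Add (f w) (g w)) (Add (term_sum f S) (term_sum g S))"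
    using insert by (auto intro: fcong.cong_add)
  also have "\<dots> \<approx> Add (Add (f w) (term_sum f S)) (Add (g w) (term_sum g S))" by (rule Add_Add_swap)
  also have "\<dots> \<approx> Add (term_sum f (insert w S)) (term_sum g (insert w S))"
    using insert by (intro fcong.cong_add fcong.sym[OF term_sum_insert]) auto
  finally show ?case .
qed

lemma term_sum_Smul: "finite S \<Longrightarrow> term_sum (\<lambda>w. Smul c (f w)) S \<approx> Smul c (term_sum f S)"
proof (induction S rule: finite_induct)
  case empty then show ?case using fcong.sym[OF Smul_Zero] by simp
next
  case (insert w S)
  have "term_sum (\<lambda>w. Smul c (f w)) (insert w S) \<approx> Add (Smul c (f w)) (term_sum (\<lambda>w. Smul c (f w)) S)"
    by (rule term_sum_insert) fact+
  also have "\<dots> \<approx> Add (Smul c (f w)) (Smul c (term_sum f S))" using insert by (auto intro: fcong.cong_add)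
  also have "\<dots> \<approx> Smul c (Add (f w) (term_sum f S))" by (rule fcong.sym, rule fcong.smul_add)
  also have "\<dots> \<approx> Smul c (term_sum f (insert w S))"
    using insert by (intro fcong.cong_smul fcong.sym[OF term_sum_insert]) auto
  finally show ?case .
qed

lemma Mul_term_sum_left: "finite S \<Longrightarrow> Mul (term_sum f S) y \<approx> term_sum (\<lambda>w. Mul (f w) y) S"
proof (induction S rule: finite_induct)
  case empty then show ?case using Mul_Zero_left by simp
next
  case (insert w S)
  have "Mul (term_sum f (insert w S)) y \<approx> Mul (Add (f w) (term_sum f S)) y"
    using insert by (intro fcong.cong_mul fcong.refl term_sum_insert)
  also have "\<dots> \<approx> Add (Mul (f w) y) (Mul (term_sum f S) y)" by (rule fcong.distrib_right)
  also have "\<dots> \<approx> Add (Mul (f w) y) (term_sum (\<lambda>w. Mul (f w) y) S)" using insert by (auto intro: fcong.cong_add)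
  also have "\<dots> \<approx> term_sum (\<lambda>w. Mul (f w) y) (insert w S)" by (rule fcong.sym, rule term_sum_insert) fact+
  finally show ?case .
qed

lemma Mul_term_sum_right: "finite S \<Longrightarrow> Mul y (term_sum f S) \<approx> term_sum (\<lambda>w. Mul y (f w)) S"
proof (induction S rule: finite_induct)
  case empty then show ?case using Mul_Zero_right by simp
next
  case (insert w S)
  have "Mul y (term_sum f (insert w S)) \<approx> Mul y (Add (f w) (term_sum f S))"
    using insert by (intro fcong.cong_mul fcong.refl term_sum_insert)
  also have "\<dots> \<approx> Add (Mul y (f w)) (Mul y (term_sum f S))" by (rule fcong.distrib_left)
  also have "\<dots> \<approx> Add (Mul y (f w)) (term_sum (\<lambda>w. Mul y (f w)) S)" using insert by (auto intro: fcong.cong_add)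
  also have "\<dots> \<approx> term_sum (\<lambda>w. Mul y (f w)) (insert w S)" by (rule fcong.sym, rule term_sum_insert) fact+
  finally show ?case .
qed

lemma term_sum_Un_disjoint:
  "finite S \<Longrightarrow> finite T \<Longrightarrow> S \<inter> T = {} \<Longrightarrow> term_sum f (S \<union> T) \<approx> Add (term_sum f S) (term_sum f T)"
proof (induction S rule: finite_induct)
  case empty then show ?case using fcong.sym[OF fcong.add_zero] by simp
next
  case (insert w S)
  have "term_sum f (insert w S \<union> T) = term_sum f (insert w (S \<union> T))" by simp
  also have "\<dots> \<approx> Add (f w) (term_sum f (S \<union> T))" using insert by (intro term_sum_insert) auto
  also have "\<dots> \<approx> Add (f w) (Add (term_sum f S) (term_sum f T))" using insert by (intro fcong.cong_add) auto
  also have "\<dots> \<approx> Add (Add (f w) (term_sum f S)) (term_sum f T)" by (rule fcong.sym, rule fcong.add_assoc)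
  also have "\<dots> \<approx> Add (term_sum f (insert w S)) (term_sum f T)"
    using insert by (intro fcong.cong_add fcong.sym[OF term_sum_insert]) auto
  finally show ?case .
qed

lemma term_sum_Zero: "finite S \<Longrightarrow> (\<And>w. w \<in> S \<Longrightarrow> f w \<approx> Zero) \<Longrightarrow> term_sum f S \<approx> Zero"
proof -
  assume S: "finite S" and zero: "\<And>w. w \<in> S \<Longrightarrow> f w \<approx> Zero"
  have "term_sum f S \<approx> term_sum (\<lambda>w. Smul 0 Zero) S"
    using S by (intro term_sum_cong fcong.trans[OF zero fcong.sym[OF Smul_0]])
  also have "\<dots> \<approx> Smul 0 (term_sum (\<lambda>w. Zero) S)" by (rule term_sum_Smul) fact
  also have "\<dots> \<approx> Zero" by (rule Smul_0)
  finally show ?thesis .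
qed

lemma term_sum_mono_neutral:
  "finite T \<Longrightarrow> S \<subseteq> T \<Longrightarrow> (\<And>w. w \<in> T - S \<Longrightarrow> f w \<approx> Zero) \<Longrightarrow> term_sum f T \<approx> term_sum f S"
proof -
  assume T: "finite T" "S \<subseteq> T" and zero: "\<And>w. w \<in> T - S \<Longrightarrow> f w \<approx> Zero"
  then have "term_sum f T = term_sum f (S \<union> (T - S))" by (simp add: Un_absorb1)
  also have "\<dots> \<approx> Add (term_sum f S) (term_sum f (T - S))"
    using T by (intro term_sum_Un_disjoint) (auto intro: finite_subset)
  also have "\<dots> \<approx> Add (term_sum f S) Zero" using T zero by (intro fcong.cong_add fcong.refl term_sum_Zero) auto
  also have "\<dots> \<approx> term_sum f S" by (rule Add_Zero_right)
  finally show ?thesis .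
qed

lemma term_sum_reindex: "finite S \<Longrightarrow> inj_on g S \<Longrightarrow> term_sum f (g ` S) \<approx> term_sum (\<lambda>w. f (g w)) S"
proof -
  assume "finite S" "inj_on g S"
  then obtain ws where ws: "set ws = S" "distinct ws" using finite_distinct_list by blast
  have "term_sum f (g ` S) \<approx> term_sum_list f (map g ws)"
    using ws \<open>inj_on g S\<close> by (intro term_sum_eq_list) (auto simp: distinct_map)
  also have "\<dots> = term_sum_list (\<lambda>w. f (g w)) ws" by (rule term_sum_list_map)
  also have "\<dots> \<approx> term_sum (\<lambda>w. f (g w)) S" by (rule fcong.sym, rule term_sum_eq_list) (use ws in auto)
  finally show ?thesis .
qed

end

lemma (in free_product) d_scalar_if_one_eq_zero:
  assumes "(1::'a) = 0"
  shows "d_scalar sA sB x"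
proof -
  have "\<And>a::'a. a = 0" by (metis assms mult_1_right mult_zero_right)
  then have "GenA (1::'a) = GenA (sA 0 1)" by metis
  then have "One \<approx> GenA (sA 0 1)" using fcong.sym[OF fcong.genA_one] by metis
  also have "\<dots> \<approx> Smul 0 (GenA 1)" by (rule fcong.genA_smul)
  also have "\<dots> \<approx> Zero" by (rule Smul_0)
  finally have One_Zero: "One \<approx> Zero" .
  have "x \<approx> Mul x One" by (rule fcong.sym, rule fcong.mul_one)
  also have "\<dots> \<approx> Mul x Zero" by (intro fcong.cong_mul fcong.refl One_Zero)
  also have "\<dots> \<approx> Zero" by (rule Mul_Zero_right)
  also have "\<dots> \<approx> Smul 0 One" by (rule fcong.sym, rule Smul_0)
  finally show ?thesis by (auto simp: d_scalar_def)
qed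

text \<open>Letters of the second factor are modelled by their preimages under \<open>\<phi>\<close>: on these,
  the product is reversed and scalars are conjugated.\<close>

definition twist :: "bool \<Rightarrow> complex \<Rightarrow> complex" where
  "twist t c = (if t then cnj c else c)"

definition side_mult :: "bool \<Rightarrow> 'a \<Rightarrow> 'a \<Rightarrow> 'a::monoid_mult" where
  "side_mult t a b = (if t then b * a else a * b)"

lemma twist_add: "twist t (x + y) = twist t x + twist t y"
  and twist_mult: "twist t (x * y) = twist t x * twist t y"
  and twist_sum: "twist t (sum f F) = (\<Sum>i\<in>F. twist t (f i))"
  by (simp_all add: twist_def)

lemma side_mult_assoc: "side_mult t a (side_mult t a' b) = side_mult t (side_mult t a a') b"
  and side_mult_1 [simp]: "side_mult t 1 b = b" "side_mult t a 1 = a"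
  by (simp_all add: side_mult_def mult.assoc)

lemma side_mult_add_left: "side_mult t (a + a') b = side_mult t a b + side_mult t a' b"
  and side_mult_sum_right: "side_mult t a (sum f F) = (\<Sum>i\<in>F. side_mult t a (f i))"
  for a :: "'a::{ring,monoid_mult}"
  by (simp_all add: side_mult_def algebra_simps sum_distrib_left sum_distrib_right)

locale star_double = free_product sA sB + vs: vector_space sA
  for sA :: "complex \<Rightarrow> 'a::{ring,monoid_mult} \<Rightarrow> 'a"
    and sB :: "complex \<Rightarrow> 'b::{ring,monoid_mult} \<Rightarrow> 'b" +
  fixes \<phi> :: "'a \<Rightarrow> 'b"
  assumes alg_A: "cplx_alg sA" and anti: "anti_iso sA sB \<phi>"
    and one_neq_zero: "(1::'a) \<noteq> 0"
begin

lemma sA_mult_left: "sA c (x * y) = sA c x * y"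
  and sA_mult_right: "sA c (x * y) = x * sA c y"
  using alg_A unfolding cplx_alg_def by blast+

lemma phi_bij: "bij \<phi>"
  and phi_add: "\<phi> (x + y) = \<phi> x + \<phi> y"
  and phi_smul: "\<phi> (sA c x) = sB (cnj c) (\<phi> x)"
  and phi_mult: "\<phi> (x * y) = \<phi> y * \<phi> x"
  using anti by (simp_all add: anti_iso_def)

lemma phi_inv_phi [simp]: "\<phi> (inv \<phi> b) = b"
  and inv_phi_phi [simp]: "inv \<phi> (\<phi> a) = a"
  using phi_bij by (simp_all add: bij_is_surj surj_f_inv_f bij_is_inj inv_f_f)

lemma phi_inj: "\<phi> x = \<phi> y \<Longrightarrow> x = y"
  by (metis inv_phi_phi)

lemma phi_one: "\<phi> 1 = 1"
proof -
  have "\<phi> 1 * y = y" for y using phi_mult[of "inv \<phi> y" 1] by simp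
  then show ?thesis by (metis mult_1_right)
qed

lemma inv_phi_one: "inv \<phi> 1 = 1"
  and inv_phi_add: "inv \<phi> (x + y) = inv \<phi> x + inv \<phi> y"
  and inv_phi_mult: "inv \<phi> (x * y) = inv \<phi> y * inv \<phi> x"
  and inv_phi_smul: "inv \<phi> (sB c x) = sA (cnj c) (inv \<phi> x)"
  by (metis inv_phi_phi phi_one) (rule phi_inj, simp add: phi_add phi_mult phi_smul)+

lemma side_mult_smul_left: "side_mult t (sA k a) x = sA k (side_mult t a x)"
  and side_mult_smul_right: "side_mult t a (sA k x) = sA k (side_mult t a x)"
  by (simp_all add: side_mult_def sA_mult_left[symmetric] sA_mult_right[symmetric])

subsection \<open>A basis of the first factor containing the unit\<close>

definition Bas :: "'a set" where "Bas = vs.extend_basis {1}"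

definition coord :: "'a \<Rightarrow> 'a \<Rightarrow> complex" where "coord a = vs.representation Bas a"

definition side_coord :: "bool \<Rightarrow> 'a \<Rightarrow> 'a \<Rightarrow> complex" where
  "side_coord t a h = twist t (coord a h)"

lemma independent_Bas: "vs.independent Bas"
  and span_Bas: "vs.span Bas = UNIV"
  and one_in_Bas: "1 \<in> Bas"
  using vs.independent_extend_basis[of "{1}"] vs.span_extend_basis[of "{1}"]
    vs.extend_basis_superset[of "{1}"] one_neq_zero
  by (auto simp: Bas_def vs.independent_insert)

lemma coord_add: "coord (a + b) h = coord a h + coord b h"
  unfolding coord_def using vs.representation_add[OF independent_Bas, of b a] span_Bas by simp

lemma coord_smul: "coord (sA c a) h = c * coord a h"
  unfolding coord_def using vs.representation_scale[OF independent_Bas, of a c] span_Bas by simp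

lemma coord_sum: "coord (sum f F) h = (\<Sum>i\<in>F. coord (f i) h)"
  unfolding coord_def using vs.representation_sum[OF independent_Bas, of F f] span_Bas by simp

lemma coord_basis: "b \<in> Bas \<Longrightarrow> coord b g = (if g = b then 1 else 0)"
  unfolding coord_def using vs.representation_basis[OF independent_Bas] by simp

lemma finite_coord: "finite {h. coord a h \<noteq> 0}"
  unfolding coord_def by (rule vs.finite_representation)

lemma coord_nonzero_in_Bas: "coord a h \<noteq> 0 \<Longrightarrow> h \<in> Bas"
  unfolding coord_def by (rule vs.representation_ne_zero)

lemma sum_coord_smul: "finite F \<Longrightarrow> {h. coord a h \<noteq> 0} \<subseteq> F \<Longrightarrow> (\<Sum>h\<in>F. sA (coord a h) h) = a"
proof -
  assume F: "finite F" "{h. coord a h \<noteq> 0} \<subseteq> F"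
  have "(\<Sum>h\<in>F. sA (coord a h) h) = (\<Sum>h | coord a h \<noteq> 0. sA (coord a h) h)"
    by (rule sum.mono_neutral_right) (use F in auto)
  also have "\<dots> = a" unfolding coord_def
    by (rule vs.sum_nonzero_representation_eq[OF independent_Bas]) (simp add: span_Bas)
  finally show ?thesis .
qed

lemma side_coord_add: "side_coord t (x + y) h = side_coord t x h + side_coord t y h"
  and side_coord_smul: "side_coord t (sA k x) h = twist t k * side_coord t x h"
  and side_coord_basis: "b \<in> Bas \<Longrightarrow> side_coord t b g = (if g = b then 1 else 0)"
  and side_coord_eq_0_iff: "side_coord t a h = 0 \<longleftrightarrow> coord a h = 0"
  by (simp_all add: side_coord_def coord_add coord_smul twist_add twist_mult coord_basis twist_def)

lemma side_coord_side_mult: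
  assumes F: "finite F" "{h. coord c h \<noteq> 0} \<subseteq> F"
  shows "(\<Sum>h\<in>F. side_coord t c h * side_coord t (side_mult t a h) g) = side_coord t (side_mult t a c) g"
proof -
  have "side_mult t a c = side_mult t a (\<Sum>h\<in>F. sA (coord c h) h)" using sum_coord_smul[OF F] by simp
  also have "\<dots> = (\<Sum>h\<in>F. sA (coord c h) (side_mult t a h))"
    by (simp add: side_mult_sum_right side_mult_smul_right)
  finally have "side_coord t (side_mult t a c) g = twist t (\<Sum>h\<in>F. coord c h * coord (side_mult t a h) g)"
    by (simp add: side_coord_def coord_sum coord_smul)
  then show ?thesis by (simp add: twist_sum twist_mult side_coord_def)
qed

end

text \<open>A letter \<open>(e, False)\<close> stands for \<open>GenA e\<close> and \<open>(e, True)\<close> for \<open>GenB (\<phi> e)\<close>.\<close>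

type_synonym 'a word = "('a \<times> bool) list"

definition starts_with :: "bool \<Rightarrow> 'a word \<Rightarrow> bool" where
  "starts_with t w \<longleftrightarrow> w \<noteq> [] \<and> snd (hd w) = t"

definition side_cons :: "bool \<Rightarrow> 'a::one \<Rightarrow> 'a word \<Rightarrow> 'a word" where
  "side_cons t h r = (if h = 1 then r else (h, t) # r)"

definition side_head :: "bool \<Rightarrow> 'a::one word \<Rightarrow> 'a" where
  "side_head t w = (if starts_with t w then fst (hd w) else 1)"

definition side_tail :: "bool \<Rightarrow> 'a word \<Rightarrow> 'a word" where
  "side_tail t w = (if starts_with t w then tl w else w)"

lemma starts_with_simps [simp]: "\<not> starts_with t []" "starts_with t ((e, s) # w) \<longleftrightarrow> s = t"
  by (simp_all add: starts_with_def)

lemma side_head_side_cons: "\<not> starts_with t r \<Longrightarrow> side_head t (side_cons t h r) = h"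
  and side_tail_side_cons: "\<not> starts_with t r \<Longrightarrow> side_tail t (side_cons t h r) = r"
  by (simp_all add: side_cons_def side_head_def side_tail_def)

lemma side_cons_eq_iff: "side_cons t h r = side_cons t h' r \<longleftrightarrow> h = h'"
  unfolding side_cons_def by (metis not_Cons_self2 list.inject prod.inject)

lemma length_side_cons: "length (side_cons t h r) \<le> Suc (length r)"
  by (simp add: side_cons_def)

lemma length_side_tail: "length (side_tail t w) \<le> length w"
  by (simp add: side_tail_def)

lemma length_side_tail_starts_with: "starts_with t w \<Longrightarrow> Suc (length (side_tail t w)) = length w"
proof -
  assume "starts_with t w"
  then have "side_tail t w = tl w" "w \<noteq> []" by (simp_all add: side_tail_def starts_with_def)
  then show ?thesis by (cases w) simp_all
qed

definition supp :: "('w \<Rightarrow> complex) \<Rightarrow> 'w set" where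
  "supp m = {w. m w \<noteq> 0}"

definition delta :: "'w \<Rightarrow> 'w \<Rightarrow> complex" where
  "delta w = (\<lambda>z. if z = w then 1 else 0)"

definition lin_ext :: "('w \<Rightarrow> 'v \<Rightarrow> complex) \<Rightarrow> ('w \<Rightarrow> complex) \<Rightarrow> 'v \<Rightarrow> complex" where
  "lin_ext f m = (\<lambda>z. \<Sum>w\<in>supp m. m w * f w z)"

lemma supp_delta [simp]: "supp (delta w) = {w}"
  by (auto simp: supp_def delta_def)

lemma supp_add: "supp (\<lambda>z. m1 z + m2 z) \<subseteq> supp m1 \<union> supp m2"
  and supp_scale: "supp (\<lambda>z. c * m z) \<subseteq> supp m"
  by (auto simp: supp_def)

lemma supp_sum_scale: "supp (\<lambda>z. \<Sum>h\<in>F. k h * g h z) \<subseteq> (\<Union>h\<in>F. supp (g h))"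
proof
  fix z assume "z \<in> supp (\<lambda>z. \<Sum>h\<in>F. k h * g h z)"
  then obtain h where "h \<in> F" "k h * g h z \<noteq> 0"
    unfolding supp_def by (blast elim: sum.not_neutral_contains_not_neutral)
  then show "z \<in> (\<Union>h\<in>F. supp (g h))" by (auto simp: supp_def)
qed

lemma supp_lin_ext: "supp (lin_ext f m) \<subseteq> (\<Union>w\<in>supp m. supp (f w))"
proof
  fix z assume "z \<in> supp (lin_ext f m)"
  then have "(\<Sum>w\<in>supp m. m w * f w z) \<noteq> 0" by (simp add: supp_def lin_ext_def)
  then obtain w where "w \<in> supp m" "m w * f w z \<noteq> 0" by (rule sum.not_neutral_contains_not_neutral)
  then show "z \<in> (\<Union>w\<in>supp m. supp (f w))" by (auto simp: supp_def)
qed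

lemma lin_ext_eq_sum: "finite S \<Longrightarrow> supp m \<subseteq> S \<Longrightarrow> lin_ext f m z = (\<Sum>w\<in>S. m w * f w z)"
  unfolding lin_ext_def by (rule sum.mono_neutral_left) (auto simp: supp_def)

lemma lin_ext_delta [simp]: "lin_ext f (delta w) = f w"
  unfolding lin_ext_def supp_delta by (simp add: delta_def)

lemma lin_ext_cong: "(\<And>w. w \<in> supp m \<Longrightarrow> f w = g w) \<Longrightarrow> lin_ext f m = lin_ext g m"
  by (simp add: lin_ext_def)

lemma lin_ext_delta_id: "finite (supp m) \<Longrightarrow> lin_ext delta m = m"
proof
  fix z assume "finite (supp m)"
  then have "lin_ext delta m z = (\<Sum>w\<in>supp m. if w = z then m w else 0)"
    unfolding lin_ext_def by (intro sum.cong) (auto simp: delta_def)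
  also have "\<dots> = m z" using \<open>finite (supp m)\<close> by (simp add: sum.delta supp_def)
  finally show "lin_ext delta m z = m z" .
qed

lemma lin_ext_add:
  "finite (supp m1) \<Longrightarrow> finite (supp m2) \<Longrightarrow>
    lin_ext f (\<lambda>z. m1 z + m2 z) = (\<lambda>z. lin_ext f m1 z + lin_ext f m2 z)"
proof
  fix z assume fin: "finite (supp m1)" "finite (supp m2)"
  let ?S = "supp m1 \<union> supp m2"
  have "lin_ext f (\<lambda>z. m1 z + m2 z) z = (\<Sum>w\<in>?S. (m1 w + m2 w) * f w z)"
    using fin supp_add[of m1 m2] by (intro lin_ext_eq_sum) auto
  also have "\<dots> = (\<Sum>w\<in>?S. m1 w * f w z) + (\<Sum>w\<in>?S. m2 w * f w z)"
    by (simp add: algebra_simps sum.distrib)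
  also have "\<dots> = lin_ext f m1 z + lin_ext f m2 z"
    using fin lin_ext_eq_sum[of ?S m1 f z] lin_ext_eq_sum[of ?S m2 f z] by auto
  finally show "lin_ext f (\<lambda>z. m1 z + m2 z) z = lin_ext f m1 z + lin_ext f m2 z" .
qed

lemma lin_ext_scale: "finite (supp m) \<Longrightarrow> lin_ext f (\<lambda>z. c * m z) = (\<lambda>z. c * lin_ext f m z)"
proof
  fix z assume "finite (supp m)"
  then have "lin_ext f (\<lambda>z. c * m z) z = (\<Sum>w\<in>supp m. (c * m w) * f w z)"
    using supp_scale[of c m] by (intro lin_ext_eq_sum) auto
  also have "\<dots> = c * lin_ext f m z" by (simp add: lin_ext_def sum_distrib_left algebra_simps)
  finally show "lin_ext f (\<lambda>z. c * m z) z = c * lin_ext f m z" .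
qed

lemma lin_ext_sum_scale:
  "finite F \<Longrightarrow> (\<And>h. h \<in> F \<Longrightarrow> finite (supp (g h))) \<Longrightarrow>
    lin_ext f (\<lambda>z. \<Sum>h\<in>F. k h * g h z) = (\<lambda>z. \<Sum>h\<in>F. k h * lin_ext f (g h) z)"
proof (induction F rule: finite_induct)
  case empty then show ?case by (simp add: lin_ext_def supp_def)
next
  case (insert x F)
  have fin: "finite (supp (\<lambda>z. \<Sum>h\<in>F. k h * g h z))"
    using insert by (intro finite_subset[OF supp_sum_scale]) auto
  have "lin_ext f (\<lambda>z. \<Sum>h\<in>insert x F. k h * g h z) = lin_ext f (\<lambda>z. k x * g x z + (\<Sum>h\<in>F. k h * g h z))"
    using insert by simp
  also have "\<dots> = (\<lambda>z. lin_ext f (\<lambda>z. k x * g x z) z + lin_ext f (\<lambda>z. \<Sum>h\<in>F. k h * g h z) z)"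
    using insert fin by (intro lin_ext_add finite_subset[OF supp_scale]) auto
  also have "\<dots> = (\<lambda>z. \<Sum>h\<in>insert x F. k h * lin_ext f (g h) z)"
    using insert by (simp add: lin_ext_scale)
  finally show ?case .
qed

lemma lin_ext_add_fun: "lin_ext (\<lambda>w z. f w z + g w z) m = (\<lambda>z. lin_ext f m z + lin_ext g m z)"
  by (simp add: lin_ext_def algebra_simps sum.distrib)

lemma lin_ext_scale_fun: "lin_ext (\<lambda>w z. c * f w z) m = (\<lambda>z. c * lin_ext f m z)"
  by (simp add: lin_ext_def sum_distrib_left algebra_simps)

lemma lin_ext_zero_fun: "lin_ext (\<lambda>w z. 0) m = (\<lambda>z. 0)"
  by (simp add: lin_ext_def)

lemma lin_ext_lin_ext:
  assumes "finite (supp m)" and "\<And>w. w \<in> supp m \<Longrightarrow> finite (supp (f w))"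
  shows "lin_ext g (lin_ext f m) = lin_ext (\<lambda>w. lin_ext g (f w)) m"
proof
  fix z
  let ?S = "\<Union>w\<in>supp m. supp (f w)"
  have fin: "finite ?S" using assms by auto
  have "lin_ext g (lin_ext f m) z = (\<Sum>w'\<in>?S. lin_ext f m w' * g w' z)"
    using fin supp_lin_ext[of f m] by (intro lin_ext_eq_sum) auto
  also have "\<dots> = (\<Sum>w'\<in>?S. \<Sum>w\<in>supp m. m w * f w w' * g w' z)"
    by (simp add: lin_ext_def sum_distrib_right)
  also have "\<dots> = (\<Sum>w\<in>supp m. \<Sum>w'\<in>?S. m w * f w w' * g w' z)" by (rule sum.swap)
  also have "\<dots> = (\<Sum>w\<in>supp m. m w * lin_ext g (f w) z)"
  proof (rule sum.cong[OF HOL.refl])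
    fix w assume "w \<in> supp m"
    then have "lin_ext g (f w) z = (\<Sum>w'\<in>?S. f w w' * g w' z)" using fin by (intro lin_ext_eq_sum) auto
    then show "(\<Sum>w'\<in>?S. m w * f w w' * g w' z) = m w * lin_ext g (f w) z"
      by (simp add: sum_distrib_left mult.assoc)
  qed
  also have "\<dots> = lin_ext (\<lambda>w. lin_ext g (f w)) m z" by (simp add: lin_ext_def)
  finally show "lin_ext g (lin_ext f m) z = lin_ext (\<lambda>w. lin_ext g (f w)) m z" .
qed

context star_double
begin

subsection \<open>Reduced words and the action of the generators\<close>

fun reduced :: "'a word \<Rightarrow> bool" where
  "reduced [] = True"
| "reduced [(e, t)] \<longleftrightarrow> e \<in> Bas \<and> e \<noteq> 1"
| "reduced ((e, t) # (f, s) # w) \<longleftrightarrow> e \<in> Bas \<and> e \<noteq> 1 \<and> t \<noteq> s \<and> reduced ((f, s) # w)"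

lemma reduced_Cons: "reduced ((e, t) # w) \<longleftrightarrow> e \<in> Bas \<and> e \<noteq> 1 \<and> \<not> starts_with t w \<and> reduced w"
  by (cases w) auto

declare reduced.simps(2,3) [simp del]

lemma reduced_side_tail: "reduced w \<Longrightarrow> reduced (side_tail t w) \<and> \<not> starts_with t (side_tail t w)"
  by (cases w) (auto simp: side_tail_def reduced_Cons)

lemma side_head_in_Bas: "reduced w \<Longrightarrow> side_head t w \<in> Bas"
  by (cases w) (auto simp: side_head_def reduced_Cons one_in_Bas)

lemma side_cons_side_head_side_tail: "reduced w \<Longrightarrow> side_cons t (side_head t w) (side_tail t w) = w"
  by (cases w) (auto simp: side_head_def side_tail_def side_cons_def reduced_Cons)

lemma reduced_side_cons: "reduced r \<Longrightarrow> \<not> starts_with t r \<Longrightarrow> h \<in> Bas \<Longrightarrow> reduced (side_cons t h r)"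
  by (simp add: side_cons_def reduced_Cons)

definition fin_reduced :: "('a word \<Rightarrow> complex) \<Rightarrow> bool" where
  "fin_reduced m \<longleftrightarrow> finite (supp m) \<and> (\<forall>w\<in>supp m. reduced w)"

lemma fin_reduced_delta: "reduced w \<Longrightarrow> fin_reduced (delta w)"
  by (simp add: fin_reduced_def)

lemma fin_reduced_add: "fin_reduced m1 \<Longrightarrow> fin_reduced m2 \<Longrightarrow> fin_reduced (\<lambda>z. m1 z + m2 z)"
  using supp_add[of m1 m2] unfolding fin_reduced_def by (auto intro: finite_subset)

lemma fin_reduced_scale: "fin_reduced m \<Longrightarrow> fin_reduced (\<lambda>z. c * m z)"
  using supp_scale[of c m] unfolding fin_reduced_def by (auto intro: finite_subset)

lemma fin_reduced_zero: "fin_reduced (\<lambda>z. 0)"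
  by (simp add: fin_reduced_def supp_def)

lemma fin_reduced_lin_ext:
  "fin_reduced m \<Longrightarrow> (\<And>w. reduced w \<Longrightarrow> fin_reduced (f w)) \<Longrightarrow> fin_reduced (lin_ext f m)"
proof -
  assume m: "fin_reduced m" and f: "\<And>w. reduced w \<Longrightarrow> fin_reduced (f w)"
  have "finite (\<Union>w\<in>supp m. supp (f w))" "\<forall>z\<in>(\<Union>w\<in>supp m. supp (f w)). reduced z"
    using m f by (auto simp: fin_reduced_def)
  then show ?thesis using supp_lin_ext[of f m] unfolding fin_reduced_def by (auto intro: finite_subset)
qed

text \<open>The coefficients of \<open>c \<cdot> r\<close>, for a word \<open>r\<close> not starting on side \<open>t\<close>.\<close>

definition prepend :: "bool \<Rightarrow> 'a \<Rightarrow> 'a word \<Rightarrow> 'a word \<Rightarrow> complex" where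
  "prepend t c r z =
    (if \<exists>h. z = side_cons t h r then side_coord t c (THE h. z = side_cons t h r) else 0)"

lemma prepend_side_cons: "prepend t c r (side_cons t h r) = side_coord t c h"
  by (auto simp: prepend_def side_cons_eq_iff)

lemma prepend_eq_0: "(\<And>h. z \<noteq> side_cons t h r) \<Longrightarrow> prepend t c r z = 0"
  by (simp add: prepend_def)

lemma prepend_nonzero_cases: "prepend t c r z \<noteq> 0 \<Longrightarrow> \<exists>h. z = side_cons t h r \<and> coord c h \<noteq> 0"
  by (metis prepend_side_cons prepend_eq_0 side_coord_eq_0_iff)

lemma prepend_add: "prepend t (c + c') r z = prepend t c r z + prepend t c' r z"
  and prepend_smul: "prepend t (sA k c) r z = twist t k * prepend t c r z"
  by (simp_all add: prepend_def side_coord_add side_coord_smul)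

lemma prepend_eq_sum: "finite F \<Longrightarrow> {h. coord c h \<noteq> 0} \<subseteq> F \<Longrightarrow>
    prepend t c r = (\<lambda>z. \<Sum>h\<in>F. side_coord t c h * delta (side_cons t h r) z)"
proof
  fix z assume F: "finite F" "{h. coord c h \<noteq> 0} \<subseteq> F"
  show "prepend t c r z = (\<Sum>h\<in>F. side_coord t c h * delta (side_cons t h r) z)"
  proof (cases "\<exists>h0. z = side_cons t h0 r")
    case True
    then obtain h0 where z: "z = side_cons t h0 r" by blast
    have "(\<Sum>h\<in>F. side_coord t c h * delta (side_cons t h r) z) = (\<Sum>h\<in>F. if h = h0 then side_coord t c h else 0)"
      by (rule sum.cong) (auto simp: z delta_def side_cons_eq_iff)
    also have "\<dots> = side_coord t c h0" using F side_coord_eq_0_iff[of t c h0] by (auto simp: sum.delta')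
    finally show ?thesis by (simp add: z prepend_side_cons)
  next
    case False
    then show ?thesis by (auto simp: prepend_eq_0 delta_def intro: sum.neutral)
  qed
qed

lemma fin_reduced_prepend: "reduced r \<Longrightarrow> \<not> starts_with t r \<Longrightarrow> fin_reduced (prepend t c r)"
proof -
  assume r: "reduced r" "\<not> starts_with t r"
  have "supp (prepend t c r) \<subseteq> (\<lambda>h. side_cons t h r) ` {h. coord c h \<noteq> 0}"
    by (auto simp: supp_def dest!: prepend_nonzero_cases)
  moreover have "\<forall>z\<in>(\<lambda>h. side_cons t h r) ` {h. coord c h \<noteq> 0}. reduced z"
    using r by (auto intro!: reduced_side_cons coord_nonzero_in_Bas)
  ultimately show ?thesis unfolding fin_reduced_def using finite_coord[of c] by (auto intro: finite_subset)
qed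

lemma prepend_basis: "b \<in> Bas \<Longrightarrow> prepend t b r = delta (side_cons t b r)"
  by (auto simp: fun_eq_iff prepend_def side_coord_basis delta_def side_cons_eq_iff)

text \<open>A letter acts on a reduced word \<open>w\<close> by multiplying into the head of \<open>w\<close> when it lies on the
  same side, and by prepending itself otherwise.\<close>

definition act_word :: "bool \<Rightarrow> 'a \<Rightarrow> 'a word \<Rightarrow> 'a word \<Rightarrow> complex" where
  "act_word t a w = prepend t (side_mult t a (side_head t w)) (side_tail t w)"

definition act :: "bool \<Rightarrow> 'a \<Rightarrow> ('a word \<Rightarrow> complex) \<Rightarrow> 'a word \<Rightarrow> complex" where
  "act t a = lin_ext (act_word t a)"

lemma fin_reduced_act_word: "reduced w \<Longrightarrow> fin_reduced (act_word t a w)"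
  unfolding act_word_def using reduced_side_tail by (intro fin_reduced_prepend) auto

lemma fin_reduced_act: "fin_reduced m \<Longrightarrow> fin_reduced (act t a m)"
  unfolding act_def by (intro fin_reduced_lin_ext fin_reduced_act_word)

lemma act_act_word: "reduced w \<Longrightarrow> act t a (act_word t a' w) = act_word t (side_mult t a a') w"
proof
  fix z assume w: "reduced w"
  let ?b = "side_head t w" and ?r = "side_tail t w"
  let ?c = "side_mult t a' ?b"
  define F where "F = {h. coord ?c h \<noteq> 0}"
  have F: "finite F" "{h. coord ?c h \<noteq> 0} \<subseteq> F" by (auto simp: F_def finite_coord)
  have r: "reduced ?r" "\<not> starts_with t ?r" using reduced_side_tail[OF w] by auto
  have "act t a (act_word t a' w) = act t a (\<lambda>z. \<Sum>h\<in>F. side_coord t ?c h * delta (side_cons t h ?r) z)"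
    unfolding act_word_def using prepend_eq_sum[OF F] by simp
  also have "\<dots> = (\<lambda>z. \<Sum>h\<in>F. side_coord t ?c h * act t a (delta (side_cons t h ?r)) z)"
    unfolding act_def using F by (intro lin_ext_sum_scale) auto
  also have "\<dots> = (\<lambda>z. \<Sum>h\<in>F. side_coord t ?c h * prepend t (side_mult t a h) ?r z)"
    by (simp add: act_def act_word_def side_head_side_cons[OF r(2)] side_tail_side_cons[OF r(2)])
  finally have act_eq: "act t a (act_word t a' w) z = (\<Sum>h\<in>F. side_coord t ?c h * prepend t (side_mult t a h) ?r z)"
    by simp
  show "act t a (act_word t a' w) z = act_word t (side_mult t a a') w z"
  proof (cases "\<exists>g. z = side_cons t g ?r")
    case True
    then obtain g where z: "z = side_cons t g ?r" by blast
    show ?thesis unfolding act_eq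
      by (simp add: z prepend_side_cons act_word_def side_coord_side_mult[OF F] side_mult_assoc)
  next
    case False
    then have "prepend t (side_mult t a h) ?r z = 0" for h by (intro prepend_eq_0) auto
    moreover have "act_word t (side_mult t a a') w z = 0"
      unfolding act_word_def using False by (intro prepend_eq_0) auto
    ultimately show ?thesis unfolding act_eq by simp
  qed
qed

lemma act_act: "fin_reduced m \<Longrightarrow> act t a (act t a' m) = act t (side_mult t a a') m"
proof -
  assume m: "fin_reduced m"
  have "act t a (act t a' m) = lin_ext (\<lambda>w. act t a (act_word t a' w)) m"
    unfolding act_def[of t a'] using m fin_reduced_act_word
    by (simp add: act_def lin_ext_lin_ext fin_reduced_def)
  also have "\<dots> = lin_ext (act_word t (side_mult t a a')) m"
    using m by (intro lin_ext_cong) (simp add: act_act_word fin_reduced_def)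
  finally show ?thesis by (simp add: act_def)
qed

lemma act_1: "fin_reduced m \<Longrightarrow> act t 1 m = m"
proof -
  assume m: "fin_reduced m"
  have "act_word t 1 w = delta w" if "reduced w" for w
    using that by (simp add: act_word_def prepend_basis side_head_in_Bas side_cons_side_head_side_tail)
  then have "act t 1 m = lin_ext delta m"
    unfolding act_def using m by (intro lin_ext_cong) (simp add: fin_reduced_def)
  then show ?thesis using m by (simp add: lin_ext_delta_id fin_reduced_def)
qed

lemma act_add_letter: "act t (a + a') m = (\<lambda>z. act t a m z + act t a' m z)"
  unfolding act_def lin_ext_add_fun[symmetric]
  by (rule arg_cong[where f="\<lambda>f. lin_ext f m"]) (simp add: fun_eq_iff act_word_def side_mult_add_left prepend_add)

lemma act_smul_letter: "act t (sA k a) m = (\<lambda>z. twist t k * act t a m z)"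
  unfolding act_def lin_ext_scale_fun[symmetric]
  by (rule arg_cong[where f="\<lambda>f. lin_ext f m"]) (simp add: fun_eq_iff act_word_def side_mult_smul_left prepend_smul)

subsection \<open>The representation of the free product\<close>

primrec op_of :: "('a, 'b) fterm \<Rightarrow> ('a word \<Rightarrow> complex) \<Rightarrow> 'a word \<Rightarrow> complex" where
  "op_of (GenA a) = act False a"
| "op_of (GenB b) = act True (inv \<phi> b)"
| "op_of One = (\<lambda>m. m)"
| "op_of Zero = (\<lambda>m z. 0)"
| "op_of (Add x y) = (\<lambda>m z. op_of x m z + op_of y m z)"
| "op_of (Mul x y) = (\<lambda>m. op_of x (op_of y m))"
| "op_of (Smul c x) = (\<lambda>m z. c * op_of x m z)"

lemma op_of_linear: "fin_reduced m \<Longrightarrow> fin_reduced (op_of x m) \<and> op_of x m = lin_ext (\<lambda>w. op_of x (delta w)) m"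
proof (induction x arbitrary: m)
  case (GenA a) then show ?case using fin_reduced_act[of m False a] by (simp add: act_def)
next
  case (GenB b) then show ?case using fin_reduced_act[of m True "inv \<phi> b"] by (simp add: act_def)
next
  case One then show ?case by (simp add: lin_ext_delta_id fin_reduced_def)
next
  case Zero then show ?case by (simp add: fin_reduced_zero lin_ext_zero_fun)
next
  case (Add x y)
  then have "fin_reduced (op_of x m)" "fin_reduced (op_of y m)"
    and "lin_ext (\<lambda>w. op_of x (delta w)) m = op_of x m" "lin_ext (\<lambda>w. op_of y (delta w)) m = op_of y m"
    by metis+
  then show ?case by (simp add: fin_reduced_add lin_ext_add_fun)
next
  case (Smul c x)
  then have "fin_reduced (op_of x m)" "lin_ext (\<lambda>w. op_of x (delta w)) m = op_of x m" by metis+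
  then show ?case by (simp add: fin_reduced_scale lin_ext_scale_fun)
next
  case (Mul x y)
  have y_m: "fin_reduced (op_of y m)" using Mul by blast
  have y_delta: "fin_reduced (op_of y (delta w))" if "w \<in> supp m" for w
  proof -
    have "reduced w" using Mul.prems that by (simp add: fin_reduced_def)
    then show ?thesis using Mul.IH(2)[OF fin_reduced_delta] by blast
  qed
  have "op_of x (op_of y m) = lin_ext (\<lambda>w'. op_of x (delta w')) (lin_ext (\<lambda>w. op_of y (delta w)) m)"
    using Mul.IH(1)[OF y_m] Mul.IH(2)[OF Mul.prems] by simp
  also have "\<dots> = lin_ext (\<lambda>w. lin_ext (\<lambda>w'. op_of x (delta w')) (op_of y (delta w))) m"
    using Mul.prems y_delta by (intro lin_ext_lin_ext) (auto simp: fin_reduced_def)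
  also have "\<dots> = lin_ext (\<lambda>w. op_of x (op_of y (delta w))) m"
    using Mul.IH(1) y_delta by (intro lin_ext_cong) metis
  finally have "op_of x (op_of y m) = lin_ext (\<lambda>w. op_of x (op_of y (delta w))) m" .
  moreover have "fin_reduced (op_of x (op_of y m))" using Mul.IH(1)[OF y_m] by blast
  ultimately show ?case unfolding op_of.simps by blast
qed

lemma fin_reduced_op_of: "fin_reduced m \<Longrightarrow> fin_reduced (op_of x m)"
  and op_of_eq_lin_ext: "fin_reduced m \<Longrightarrow> op_of x m = lin_ext (\<lambda>w. op_of x (delta w)) m"
  using op_of_linear by blast+

lemma op_of_add:
  "fin_reduced m1 \<Longrightarrow> fin_reduced m2 \<Longrightarrow> op_of x (\<lambda>z. m1 z + m2 z) = (\<lambda>z. op_of x m1 z + op_of x m2 z)"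
  by (simp add: op_of_eq_lin_ext[of m1] op_of_eq_lin_ext[of m2] op_of_eq_lin_ext[OF fin_reduced_add]
      lin_ext_add fin_reduced_def)

lemma op_of_scale: "fin_reduced m \<Longrightarrow> op_of x (\<lambda>z. c * m z) = (\<lambda>z. c * op_of x m z)"
  by (simp add: op_of_eq_lin_ext[of m] op_of_eq_lin_ext[OF fin_reduced_scale] lin_ext_scale fin_reduced_def)

theorem op_of_fcong: "x \<approx> y \<Longrightarrow> fin_reduced m \<Longrightarrow> op_of x m = op_of y m"
proof (induction arbitrary: m rule: fcong.induct)
  case (cong_mul x x' y y')
  then show ?case using fin_reduced_op_of[of m y] by simp
next
  case (distrib_left x y z)
  then show ?case by (simp add: op_of_add fin_reduced_op_of)
next
  case (smul_mul_right x c y)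
  then show ?case by (simp add: op_of_scale fin_reduced_op_of)
next
  case (genA_smul c a) then show ?case by (simp add: act_smul_letter twist_def)
next
  case (genA_mul a a') then show ?case by (simp add: act_act side_mult_def)
next
  case genA_one then show ?case by (simp add: act_1)
next
  case (genB_add b b') then show ?case by (simp add: act_add_letter inv_phi_add)
next
  case (genB_smul c b) then show ?case by (simp add: act_smul_letter twist_def inv_phi_smul)
next
  case (genB_mul b b') then show ?case by (simp add: act_act side_mult_def inv_phi_mult)
next
  case genB_one then show ?case by (simp add: act_1 inv_phi_one)
qed (simp_all add: fun_eq_iff algebra_simps act_add_letter)

subsection \<open>Recovering a term from its action\<close>

definition letter :: "bool \<Rightarrow> 'a \<Rightarrow> ('a, 'b) fterm" where
  "letter t e = (if t then GenB (\<phi> e) else GenA e)"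

fun word_term :: "'a word \<Rightarrow> ('a, 'b) fterm" where
  "word_term [] = One"
| "word_term ((e, t) # w) = Mul (letter t e) (word_term w)"

definition term_of :: "('a word \<Rightarrow> complex) \<Rightarrow> ('a, 'b) fterm" where
  "term_of m = term_sum (\<lambda>w. Smul (m w) (word_term w)) (supp m)"

lemma op_of_letter: "op_of (letter t e) = act t e"
  by (simp add: letter_def)

lemma letter_side_mult: "letter t (side_mult t a a') \<approx> Mul (letter t a) (letter t a')"
  by (cases t) (simp_all add: letter_def side_mult_def phi_mult fcong.genA_mul fcong.genB_mul)

lemma letter_smul: "letter t (sA k a) \<approx> Smul (twist t k) (letter t a)"
  by (cases t) (simp_all add: letter_def twist_def phi_smul fcong.genA_smul fcong.genB_smul)

lemma letter_add: "letter t (a + a') \<approx> Add (letter t a) (letter t a')"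
  by (cases t) (simp_all add: letter_def phi_add fcong.genA_add fcong.genB_add)

lemma letter_1: "letter t 1 \<approx> One"
  by (cases t) (simp_all add: letter_def phi_one fcong.genA_one fcong.genB_one)

lemma letter_0: "letter t 0 \<approx> Zero"
proof -
  have "letter t 0 = letter t (sA 0 0)" by simp
  also have "\<dots> \<approx> Smul (twist t 0) (letter t 0)" by (rule letter_smul)
  also have "\<dots> \<approx> Zero" using Smul_0 by (simp add: twist_def)
  finally show ?thesis .
qed

lemma letter_sum: "finite F \<Longrightarrow> letter t (\<Sum>h\<in>F. g h) \<approx> term_sum (\<lambda>h. letter t (g h)) F"
proof (induction F rule: finite_induct)
  case empty then show ?case by (simp add: letter_0)
next
  case (insert x F)
  have "letter t (\<Sum>h\<in>insert x F. g h) = letter t (g x + (\<Sum>h\<in>F. g h))" using insert by simp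
  also have "\<dots> \<approx> Add (letter t (g x)) (letter t (\<Sum>h\<in>F. g h))" by (rule letter_add)
  also have "\<dots> \<approx> Add (letter t (g x)) (term_sum (\<lambda>h. letter t (g h)) F)"
    using insert by (intro fcong.cong_add fcong.refl)
  also have "\<dots> \<approx> term_sum (\<lambda>h. letter t (g h)) (insert x F)"
    by (rule fcong.sym, rule term_sum_insert) (use insert in auto)
  finally show ?case .
qed

lemma letter_eq_sum: "finite F \<Longrightarrow> {h. coord c h \<noteq> 0} \<subseteq> F \<Longrightarrow>
    letter t c \<approx> term_sum (\<lambda>h. Smul (side_coord t c h) (letter t h)) F"
proof -
  assume F: "finite F" "{h. coord c h \<noteq> 0} \<subseteq> F"
  have "letter t c = letter t (\<Sum>h\<in>F. sA (coord c h) h)" using sum_coord_smul[OF F] by simp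
  also have "\<dots> \<approx> term_sum (\<lambda>h. letter t (sA (coord c h) h)) F" by (rule letter_sum) fact
  also have "\<dots> \<approx> term_sum (\<lambda>h. Smul (side_coord t c h) (letter t h)) F"
    using F by (intro term_sum_cong) (auto simp: side_coord_def intro: letter_smul)
  finally show ?thesis .
qed

lemma Mul_letter_word_term: "Mul (letter t h) (word_term r) \<approx> word_term (side_cons t h r)"
proof (cases "h = 1")
  case True
  have "Mul (letter t h) (word_term r) \<approx> Mul One (word_term r)"
    using True letter_1[of t] by (simp add: fcong.cong_mul)
  also have "\<dots> \<approx> word_term r" by (rule fcong.one_mul)
  finally show ?thesis using True by (simp add: side_cons_def)
qed (simp add: side_cons_def)

lemma word_term_split: "reduced w \<Longrightarrow> word_term w \<approx> Mul (letter t (side_head t w)) (word_term (side_tail t w))"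
  using Mul_letter_word_term[of t "side_head t w" "side_tail t w"] side_cons_side_head_side_tail[of w t]
  by (simp add: fcong.sym)

lemma term_of_eq_sum: "finite S \<Longrightarrow> supp m \<subseteq> S \<Longrightarrow> term_of m \<approx> term_sum (\<lambda>w. Smul (m w) (word_term w)) S"
  unfolding term_of_def by (rule fcong.sym, rule term_sum_mono_neutral) (auto simp: supp_def Smul_0)

lemma term_of_zero: "term_of (\<lambda>z. 0) = Zero"
  by (simp add: term_of_def supp_def)

lemma term_of_add:
  "finite (supp m1) \<Longrightarrow> finite (supp m2) \<Longrightarrow> term_of (\<lambda>z. m1 z + m2 z) \<approx> Add (term_of m1) (term_of m2)"
proof -
  assume fin: "finite (supp m1)" "finite (supp m2)"
  let ?S = "supp m1 \<union> supp m2"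
  have "term_of (\<lambda>z. m1 z + m2 z) \<approx> term_sum (\<lambda>w. Smul (m1 w + m2 w) (word_term w)) ?S"
    using fin supp_add[of m1 m2] by (intro term_of_eq_sum) auto
  also have "\<dots> \<approx> term_sum (\<lambda>w. Add (Smul (m1 w) (word_term w)) (Smul (m2 w) (word_term w))) ?S"
    using fin by (intro term_sum_cong fcong.add_smul) simp
  also have "\<dots> \<approx> Add (term_sum (\<lambda>w. Smul (m1 w) (word_term w)) ?S) (term_sum (\<lambda>w. Smul (m2 w) (word_term w)) ?S)"
    using fin by (intro term_sum_Add) simp
  also have "\<dots> \<approx> Add (term_of m1) (term_of m2)"
    using fin by (intro fcong.cong_add fcong.sym[OF term_of_eq_sum]) auto
  finally show ?thesis .
qed

lemma term_of_scale: "finite (supp m) \<Longrightarrow> term_of (\<lambda>z. c * m z) \<approx> Smul c (term_of m)"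
proof -
  assume fin: "finite (supp m)"
  have "term_of (\<lambda>z. c * m z) \<approx> term_sum (\<lambda>w. Smul (c * m w) (word_term w)) (supp m)"
    using fin supp_scale[of c m] by (intro term_of_eq_sum) auto
  also have "\<dots> \<approx> term_sum (\<lambda>w. Smul c (Smul (m w) (word_term w))) (supp m)"
    using fin by (intro term_sum_cong fcong.smul_smul)
  also have "\<dots> \<approx> Smul c (term_of m)" unfolding term_of_def using fin by (rule term_sum_Smul)
  finally show ?thesis .
qed

lemma term_of_delta: "term_of (delta w) \<approx> word_term w"
proof -
  have "term_of (delta w) = term_sum (\<lambda>v. Smul (delta w v) (word_term v)) {w}" by (simp add: term_of_def)
  also have "\<dots> \<approx> Smul (delta w w) (word_term w)" by (rule term_sum_singleton)
  also have "\<dots> \<approx> word_term w" by (simp add: delta_def fcong.smul_one)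
  finally show ?thesis .
qed

lemma term_of_sum_scale: "finite F \<Longrightarrow> (\<And>h. h \<in> F \<Longrightarrow> finite (supp (g h))) \<Longrightarrow>
    term_of (\<lambda>z. \<Sum>h\<in>F. k h * g h z) \<approx> term_sum (\<lambda>h. Smul (k h) (term_of (g h))) F"
proof (induction F rule: finite_induct)
  case empty then show ?case by (simp add: term_of_zero)
next
  case (insert x F)
  have fin: "finite (supp (\<lambda>z. \<Sum>h\<in>F. k h * g h z))"
    using insert by (intro finite_subset[OF supp_sum_scale]) auto
  have fin_x: "finite (supp (\<lambda>z. k x * g x z))" using insert by (intro finite_subset[OF supp_scale]) auto
  have "term_of (\<lambda>z. \<Sum>h\<in>insert x F. k h * g h z) = term_of (\<lambda>z. k x * g x z + (\<Sum>h\<in>F. k h * g h z))"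
    using insert by simp
  also have "\<dots> \<approx> Add (term_of (\<lambda>z. k x * g x z)) (term_of (\<lambda>z. \<Sum>h\<in>F. k h * g h z))"
    by (rule term_of_add[OF fin_x fin])
  also have "\<dots> \<approx> Add (Smul (k x) (term_of (g x))) (term_sum (\<lambda>h. Smul (k h) (term_of (g h))) F)"
    using insert by (intro fcong.cong_add term_of_scale) auto
  also have "\<dots> \<approx> term_sum (\<lambda>h. Smul (k h) (term_of (g h))) (insert x F)"
    by (rule fcong.sym, rule term_sum_insert) (use insert in auto)
  finally show ?case .
qed

lemma term_of_act_word: "reduced w \<Longrightarrow> term_of (act_word t a w) \<approx> Mul (letter t a) (word_term w)"
proof -
  assume w: "reduced w"
  let ?b = "side_head t w" and ?r = "side_tail t w"
  let ?c = "side_mult t a ?b"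
  define F where "F = {h. coord ?c h \<noteq> 0}"
  have F: "finite F" "{h. coord ?c h \<noteq> 0} \<subseteq> F" by (auto simp: F_def finite_coord)
  have "term_of (act_word t a w) = term_of (\<lambda>z. \<Sum>h\<in>F. side_coord t ?c h * delta (side_cons t h ?r) z)"
    unfolding act_word_def using prepend_eq_sum[OF F] by simp
  also have "\<dots> \<approx> term_sum (\<lambda>h. Smul (side_coord t ?c h) (term_of (delta (side_cons t h ?r)))) F"
    using F by (intro term_of_sum_scale) auto
  also have "\<dots> \<approx> term_sum (\<lambda>h. Smul (side_coord t ?c h) (Mul (letter t h) (word_term ?r))) F"
    using F by (intro term_sum_cong fcong.cong_smul fcong.trans[OF term_of_delta fcong.sym[OF Mul_letter_word_term]])
  also have "\<dots> \<approx> term_sum (\<lambda>h. Mul (Smul (side_coord t ?c h) (letter t h)) (word_term ?r)) F"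
    using F by (intro term_sum_cong fcong.sym[OF fcong.smul_mul_left])
  also have "\<dots> \<approx> Mul (term_sum (\<lambda>h. Smul (side_coord t ?c h) (letter t h)) F) (word_term ?r)"
    by (rule fcong.sym, rule Mul_term_sum_left) fact
  also have "\<dots> \<approx> Mul (letter t ?c) (word_term ?r)"
    by (intro fcong.cong_mul fcong.refl fcong.sym[OF letter_eq_sum] F)
  also have "\<dots> \<approx> Mul (Mul (letter t a) (letter t ?b)) (word_term ?r)"
    by (intro fcong.cong_mul fcong.refl letter_side_mult)
  also have "\<dots> \<approx> Mul (letter t a) (Mul (letter t ?b) (word_term ?r))" by (rule fcong.mul_assoc)
  also have "\<dots> \<approx> Mul (letter t a) (word_term w)"
    by (intro fcong.cong_mul fcong.refl fcong.sym[OF word_term_split] w)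
  finally show ?thesis .
qed

lemma term_of_act: "fin_reduced m \<Longrightarrow> term_of (act t a m) \<approx> Mul (letter t a) (term_of m)"
proof -
  assume m: "fin_reduced m"
  then have fin: "finite (supp m)" and red: "\<And>w. w \<in> supp m \<Longrightarrow> reduced w"
    by (simp_all add: fin_reduced_def)
  have "term_of (act t a m) \<approx> term_sum (\<lambda>w. Smul (m w) (term_of (act_word t a w))) (supp m)"
    unfolding act_def lin_ext_def using fin red fin_reduced_act_word
    by (intro term_of_sum_scale) (auto simp: fin_reduced_def)
  also have "\<dots> \<approx> term_sum (\<lambda>w. Smul (m w) (Mul (letter t a) (word_term w))) (supp m)"
    using fin red by (intro term_sum_cong fcong.cong_smul term_of_act_word)
  also have "\<dots> \<approx> term_sum (\<lambda>w. Mul (letter t a) (Smul (m w) (word_term w))) (supp m)"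
    using fin by (intro term_sum_cong fcong.sym[OF fcong.smul_mul_right])
  also have "\<dots> \<approx> Mul (letter t a) (term_of m)"
    unfolding term_of_def by (rule fcong.sym, rule Mul_term_sum_right) fact
  finally show ?thesis .
qed

theorem term_of_op_of: "fin_reduced m \<Longrightarrow> term_of (op_of x m) \<approx> Mul x (term_of m)"
proof (induction x arbitrary: m)
  case (GenA a)
  then show ?case using term_of_act[of m False a] by (simp add: letter_def)
next
  case (GenB b)
  then show ?case using term_of_act[of m True "inv \<phi> b"] by (simp add: letter_def)
next
  case One then show ?case by (simp add: fcong.sym[OF fcong.one_mul])
next
  case Zero then show ?case by (simp add: term_of_zero fcong.sym[OF Mul_Zero_left])
next
  case (Add x y)
  have "term_of (op_of (Add x y) m) \<approx> Add (term_of (op_of x m)) (term_of (op_of y m))"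
    using fin_reduced_op_of[OF Add.prems] by (simp add: term_of_add fin_reduced_def)
  also have "\<dots> \<approx> Add (Mul x (term_of m)) (Mul y (term_of m))" using Add by (intro fcong.cong_add)
  also have "\<dots> \<approx> Mul (Add x y) (term_of m)" by (rule fcong.sym, rule fcong.distrib_right)
  finally show ?case .
next
  case (Smul c x)
  have "term_of (op_of (Smul c x) m) \<approx> Smul c (term_of (op_of x m))"
    using fin_reduced_op_of[OF Smul.prems] by (simp add: term_of_scale fin_reduced_def)
  also have "\<dots> \<approx> Smul c (Mul x (term_of m))" using Smul by (intro fcong.cong_smul)
  also have "\<dots> \<approx> Mul (Smul c x) (term_of m)" by (rule fcong.sym, rule fcong.smul_mul_left)
  finally show ?case .
next
  case (Mul x y)
  have "term_of (op_of (Mul x y) m) \<approx> Mul x (term_of (op_of y m))"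
    using Mul.IH(1)[OF fin_reduced_op_of[OF Mul.prems]] by simp
  also have "\<dots> \<approx> Mul x (Mul y (term_of m))" using Mul by (intro fcong.cong_mul fcong.refl)
  also have "\<dots> \<approx> Mul (Mul x y) (term_of m)" by (rule fcong.sym, rule fcong.mul_assoc)
  finally show ?case .
qed

text \<open>The coefficients of (the image of) \<open>x\<close> in the basis of reduced words.\<close>

abbreviation coeffs :: "('a, 'b) fterm \<Rightarrow> 'a word \<Rightarrow> complex" where
  "coeffs x \<equiv> op_of x (delta [])"

lemma fin_reduced_coeffs: "fin_reduced (coeffs x)"
  by (intro fin_reduced_op_of fin_reduced_delta) simp

lemma fcong_term_of_coeffs: "x \<approx> term_of (coeffs x)"
proof -
  have "term_of (coeffs x) \<approx> Mul x (term_of (delta []))" by (rule term_of_op_of) (simp add: fin_reduced_delta)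
  also have "\<dots> \<approx> Mul x One" using term_of_delta[of "[]"] by (intro fcong.cong_mul fcong.refl) simp
  also have "\<dots> \<approx> x" by (rule fcong.mul_one)
  finally show ?thesis by (rule fcong.sym)
qed

lemma d_scalar_if_supp_coeffs: "supp (coeffs x) \<subseteq> {[]} \<Longrightarrow> d_scalar sA sB x"
proof -
  assume supp: "supp (coeffs x) \<subseteq> {[]}"
  have "x \<approx> term_of (coeffs x)" by (rule fcong_term_of_coeffs)
  also have "\<dots> \<approx> term_sum (\<lambda>w. Smul (coeffs x w) (word_term w)) {[]}" using supp by (intro term_of_eq_sum) auto
  also have "\<dots> \<approx> Smul (coeffs x []) One" using term_sum_singleton[of "\<lambda>w. Smul (coeffs x w) (word_term w)" "[]"] by simp
  finally show ?thesis by (auto simp: d_scalar_def)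
qed

end

definition word_star :: "'a word \<Rightarrow> 'a word" where
  "word_star w = rev (map (\<lambda>(e, t). (e, \<not> t)) w)"

definition coeffs_star :: "('a word \<Rightarrow> complex) \<Rightarrow> 'a word \<Rightarrow> complex" where
  "coeffs_star m = (\<lambda>w. cnj (m (word_star w)))"

lemma word_star_word_star [simp]: "word_star (word_star w) = w"
  by (simp add: word_star_def rev_map comp_def case_prod_beta)

lemma word_star_Nil [simp]: "word_star [] = []"
  and length_word_star [simp]: "length (word_star w) = length w"
  by (simp_all add: word_star_def)

lemma word_star_Cons: "word_star ((e, t) # w) = word_star w @ [(e, \<not> t)]"
  by (simp add: word_star_def)

lemma inj_word_star: "inj word_star"
  by (metis injI word_star_word_star)

lemma last_word_star: "w \<noteq> [] \<Longrightarrow> last (word_star w) = (fst (hd w), \<not> snd (hd w))"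
  by (cases w) (auto simp: word_star_def)

lemma supp_coeffs_star: "supp (coeffs_star m) = word_star ` supp m"
  by (auto simp: supp_def coeffs_star_def image_iff) (metis word_star_word_star)

context star_double
begin

lemma reduced_append:
  "reduced (u @ w) \<longleftrightarrow> reduced u \<and> reduced w \<and> (u \<noteq> [] \<longrightarrow> w \<noteq> [] \<longrightarrow> snd (last u) \<noteq> snd (hd w))"
proof (induction u)
  case (Cons x u)
  obtain e t where x: "x = (e, t)" by (cases x)
  show ?case
  proof (cases u)
    case Nil
    then show ?thesis using x by (cases w) (auto simp: reduced_Cons starts_with_def)
  next
    case (Cons y u')
    then show ?thesis using x Cons.IH by (auto simp: reduced_Cons starts_with_def)
  qed
qed simp

lemma reduced_word_star: "reduced w \<Longrightarrow> reduced (word_star w)"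
proof (induction w)
  case (Cons x w)
  obtain e t where x: "x = (e, t)" by (cases x)
  have "e \<in> Bas" "e \<noteq> 1" "\<not> starts_with t w" "reduced w" using Cons.prems x by (auto simp: reduced_Cons)
  then show ?case unfolding x word_star_Cons reduced_append using Cons.IH
    by (cases w) (auto simp: reduced_Cons last_word_star starts_with_def)
qed simp

lemma word_term_append: "word_term (u @ w) \<approx> Mul (word_term u) (word_term w)"
proof (induction u)
  case Nil then show ?case by (simp add: fcong.sym[OF fcong.one_mul])
next
  case (Cons x u)
  obtain e t where x: "x = (e, t)" by (cases x)
  have "word_term ((x # u) @ w) = Mul (letter t e) (word_term (u @ w))" by (simp add: x)
  also have "\<dots> \<approx> Mul (letter t e) (Mul (word_term u) (word_term w))" using Cons by (intro fcong.cong_mul fcong.refl)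
  also have "\<dots> \<approx> Mul (word_term (x # u)) (word_term w)" by (simp add: x fcong.sym[OF fcong.mul_assoc])
  finally show ?case .
qed

lemma dstar_word_term: "dstar \<phi> (word_term w) \<approx> word_term (word_star w)"
proof (induction w)
  case (Cons x w)
  obtain e t where x: "x = (e, t)" by (cases x)
  have "dstar \<phi> (word_term (x # w)) = Mul (dstar \<phi> (word_term w)) (letter (\<not> t) e)"
    by (simp add: x letter_def)
  also have "\<dots> \<approx> Mul (word_term (word_star w)) (Mul (letter (\<not> t) e) One)"
    using Cons by (intro fcong.cong_mul fcong.sym[OF fcong.mul_one])
  also have "\<dots> \<approx> word_term (word_star (x # w))"
    using word_term_append[of "word_star w" "[(e, \<not> t)]"] by (simp add: x word_star_Cons fcong.sym)
  finally show ?case .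
qed simp

lemma dstar_term_of: "fin_reduced m \<Longrightarrow> dstar \<phi> (term_of m) \<approx> term_of (coeffs_star m)"
proof -
  assume "fin_reduced m"
  then have fin: "finite (supp m)" by (simp add: fin_reduced_def)
  have "dstar \<phi> (term_of m) = term_sum (\<lambda>w. Smul (cnj (m w)) (dstar \<phi> (word_term w))) (supp m)"
    by (simp add: term_of_def dstar_term_sum)
  also have "\<dots> \<approx> term_sum (\<lambda>w. Smul (cnj (m w)) (word_term (word_star w))) (supp m)"
    using fin by (intro term_sum_cong fcong.cong_smul dstar_word_term)
  also have "\<dots> = term_sum (\<lambda>w. Smul (coeffs_star m (word_star w)) (word_term (word_star w))) (supp m)"
    by (simp add: coeffs_star_def)
  also have "\<dots> \<approx> term_of (coeffs_star m)" unfolding term_of_def supp_coeffs_star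
    by (rule fcong.sym, rule term_sum_reindex[OF fin inj_on_subset[OF inj_word_star subset_UNIV]])
  finally show ?thesis .
qed

theorem dstar_fcong: "x \<approx> y \<Longrightarrow> dstar \<phi> x \<approx> dstar \<phi> y"
proof (induction rule: fcong.induct)
  case (sym x y) from sym(2) show ?case by (rule fcong.sym)
next
  case (trans x y z) from trans.IH show ?case by (rule fcong.trans)
next
  case (add_neg x) then show ?case using fcong.add_neg[of sA sB "dstar \<phi> x"] by simp
next
  case (add_smul c d x) then show ?case using fcong.add_smul[of sA sB "cnj c" "cnj d"] by simp
next
  case (smul_smul c d x) then show ?case using fcong.smul_smul[of sA sB "cnj c" "cnj d"] by simp
next
  case (mul_assoc x y z) then show ?case by (simp add: fcong.sym[OF fcong.mul_assoc])
qed (simp_all add: fcong.cong_add fcong.cong_mul fcong.cong_smul fcong.add_assoc fcong.add_comm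
      fcong.add_zero fcong.smul_add fcong.smul_one fcong.one_mul fcong.mul_one
      fcong.distrib_left fcong.distrib_right fcong.smul_mul_left fcong.smul_mul_right
      fcong.genA_add fcong.genA_smul fcong.genA_mul fcong.genA_one
      fcong.genB_add fcong.genB_smul fcong.genB_mul fcong.genB_one
      phi_add phi_smul phi_mult phi_one inv_phi_add inv_phi_smul inv_phi_mult inv_phi_one)

subsection \<open>The longest words of \<open>x\<^sup>* x\<close>\<close>

lemma op_of_term_sum: "finite S \<Longrightarrow> op_of (term_sum f S) m z = (\<Sum>w\<in>S. op_of (f w) m z)"
proof -
  assume "finite S"
  then have "\<exists>ws. set ws = S \<and> distinct ws" using finite_distinct_list by blast
  then have ws: "set (SOME ws. set ws = S \<and> distinct ws) = S \<and> distinct (SOME ws. set ws = S \<and> distinct ws)"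
    by (rule someI_ex)
  have "op_of (term_sum_list f ws) m z = sum_list (map (\<lambda>w. op_of (f w) m z) ws)" for ws
    by (induction ws) auto
  then show ?thesis unfolding term_sum_def using ws by (simp add: sum_list_distinct_conv_sum_set)
qed

lemma op_of_term_of: "finite (supp m') \<Longrightarrow> op_of (term_of m') m z = (\<Sum>u\<in>supp m'. m' u * op_of (word_term u) m z)"
  unfolding term_of_def by (simp add: op_of_term_sum)

lemma length_le_if_act_word_nonzero: "act_word t a w z \<noteq> 0 \<Longrightarrow> length z \<le> Suc (length w)"
  and length_le_if_act_word_nonzero_starts_with: "act_word t a w z \<noteq> 0 \<Longrightarrow> starts_with t w \<Longrightarrow> length z \<le> length w"
proof -
  assume "act_word t a w z \<noteq> 0"
  then obtain h where z: "z = side_cons t h (side_tail t w)"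
    unfolding act_word_def using prepend_nonzero_cases by blast
  then show "length z \<le> Suc (length w)"
    using length_side_tail[of t w] length_side_cons[of t h "side_tail t w"] by simp
  show "starts_with t w \<Longrightarrow> length z \<le> length w"
    using z length_side_tail_starts_with[of t w] length_side_cons[of t h "side_tail t w"] by simp
qed

lemma length_le_if_act_nonzero:
  "\<forall>w\<in>supp m. length w \<le> n \<Longrightarrow> act t a m z \<noteq> 0 \<Longrightarrow> length z \<le> Suc n"
proof -
  assume n: "\<forall>w\<in>supp m. length w \<le> n" and "act t a m z \<noteq> 0"
  then have "(\<Sum>w\<in>supp m. m w * act_word t a w z) \<noteq> 0" by (simp add: act_def lin_ext_def)
  then obtain w where "w \<in> supp m" "m w * act_word t a w z \<noteq> 0" by (rule sum.not_neutral_contains_not_neutral)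
  then show ?thesis using n length_le_if_act_word_nonzero[of t a w z] by fastforce
qed

lemma length_le_if_op_of_word_term_nonzero:
  "\<forall>w\<in>supp m. length w \<le> n \<Longrightarrow> op_of (word_term u) m z \<noteq> 0 \<Longrightarrow> length z \<le> length u + n"
proof (induction u arbitrary: z)
  case (Cons x u)
  obtain e t where x: "x = (e, t)" by (cases x)
  have "act t e (op_of (word_term u) m) z \<noteq> 0" using Cons.prems x by (simp add: op_of_letter)
  moreover have "\<forall>z'\<in>supp (op_of (word_term u) m). length z' \<le> length u + n"
    using Cons.IH Cons.prems(1) by (simp add: supp_def)
  ultimately show ?case using x length_le_if_act_nonzero by fastforce
qed (simp add: supp_def)

lemma op_of_word_term_delta: "reduced (u @ w) \<Longrightarrow> op_of (word_term u) (delta w) = delta (u @ w)"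
proof (induction u)
  case (Cons x u)
  obtain e t where x: "x = (e, t)" by (cases x)
  have uw: "reduced (u @ w)" "e \<in> Bas" "e \<noteq> 1" "\<not> starts_with t (u @ w)"
    using Cons.prems x by (auto simp: reduced_Cons)
  have "op_of (word_term (x # u)) (delta w) = act t e (delta (u @ w))"
    using Cons.IH[OF uw(1)] x by (simp add: op_of_letter)
  also have "\<dots> = delta ((e, t) # u @ w)"
    using uw by (simp add: act_def act_word_def side_head_def side_tail_def prepend_basis side_cons_def)
  finally show ?case using x by simp
qed simp

text \<open>If the last letter of \<open>u\<close> and the first letter of \<open>w\<close> lie on the same side, they merge.\<close>

lemma length_less_if_op_of_word_term_delta_nonzero:
  assumes "reduced w" and "u \<noteq> []" and "w \<noteq> []" and "snd (last u) = snd (hd w)"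
    and "op_of (word_term u) (delta w) z \<noteq> 0"
  shows "length z < length u + length w"
proof -
  obtain u' e t where u: "u = u' @ [(e, t)]" using assms(2) by (metis rev_exhaust surj_pair)
  have "starts_with t w" using assms(3,4) u by (cases w) (auto simp: starts_with_def)
  then have act_short: "\<forall>z'\<in>supp (act_word t e w). length z' \<le> length w"
    using length_le_if_act_word_nonzero_starts_with by (auto simp: supp_def)
  have "op_of (word_term u) (delta w) = op_of (Mul (word_term u') (word_term [(e, t)])) (delta w)"
    unfolding u by (rule op_of_fcong[OF word_term_append fin_reduced_delta[OF assms(1)]])
  also have "\<dots> = op_of (word_term u') (act_word t e w)" by (simp add: op_of_letter act_def)
  finally have "op_of (word_term u') (act_word t e w) z \<noteq> 0" using assms(5) by simp
  then have "length z \<le> length u' + length w" using act_short length_le_if_op_of_word_term_nonzero by blast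
  then show ?thesis using u by simp
qed

lemma op_of_word_term_delta_longest:
  assumes "reduced u" and "reduced w" and "length u \<le> length w0" and "length w \<le> length w0"
    and "w0 \<noteq> []"
  shows "op_of (word_term u) (delta w) (word_star w0 @ w0) = (if u = word_star w0 \<and> w = w0 then 1 else 0)"
proof (cases "length u = length w0 \<and> length w = length w0")
  case False
  then have "length u + length w < length (word_star w0 @ w0)" using assms(3,4) by auto
  then have "op_of (word_term u) (delta w) (word_star w0 @ w0) = 0"
    using length_le_if_op_of_word_term_nonzero[of "delta w" "length w" u "word_star w0 @ w0"] by auto
  then show ?thesis using False by auto
next
  case True
  then have ne: "u \<noteq> []" "w \<noteq> []" using assms(5) by auto
  show ?thesis
  proof (cases "snd (last u) = snd (hd w)")
    case True
    then have "op_of (word_term u) (delta w) (word_star w0 @ w0) = 0"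
      using length_less_if_op_of_word_term_delta_nonzero[OF assms(2) ne True] \<open>length u = length w0 \<and> _\<close>
      by fastforce
    moreover have "u \<noteq> word_star w0 \<or> w \<noteq> w0" using True ne last_word_star[of w0] by auto
    ultimately show ?thesis by auto
  next
    case False
    then have "reduced (u @ w)" using assms(1,2) by (simp add: reduced_append)
    then have "op_of (word_term u) (delta w) = delta (u @ w)" by (rule op_of_word_term_delta)
    then show ?thesis using \<open>length u = length w0 \<and> _\<close> by (auto simp: delta_def append_eq_append_conv)
  qed
qed

lemma op_of_term_of_coeffs_star_longest:
  assumes m: "fin_reduced m" and w0: "w0 \<in> supp m" "w0 \<noteq> []" and longest: "\<forall>w\<in>supp m. length w \<le> length w0"
  shows "op_of (term_of (coeffs_star m)) m (word_star w0 @ w0) = cnj (m w0) * m w0"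
proof -
  let ?z = "word_star w0 @ w0" and ?m' = "coeffs_star m"
  have fin: "finite (supp m)" and red: "\<And>w. w \<in> supp m \<Longrightarrow> reduced w" using m by (auto simp: fin_reduced_def)
  have red': "\<And>u. u \<in> supp ?m' \<Longrightarrow> reduced u \<and> length u \<le> length w0"
    using red longest reduced_word_star by (auto simp: supp_coeffs_star)
  have "op_of (term_of ?m') m ?z = (\<Sum>u\<in>supp ?m'. ?m' u * op_of (word_term u) m ?z)"
    using fin by (simp add: op_of_term_of supp_coeffs_star)
  also have "\<dots> = (\<Sum>u\<in>supp ?m'. ?m' u * (\<Sum>w\<in>supp m. m w * op_of (word_term u) (delta w) ?z))"
    by (rule sum.cong[OF HOL.refl]) (simp add: op_of_eq_lin_ext[OF m] lin_ext_def)
  also have "\<dots> = (\<Sum>u\<in>supp ?m'. ?m' u * (\<Sum>w\<in>supp m. if w = w0 then (if u = word_star w0 then m w else 0) else 0))"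
    using red red' longest w0(2) by (intro sum.cong HOL.refl arg_cong[where f="\<lambda>s. ?m' _ * s"])
      (simp add: op_of_word_term_delta_longest)
  also have "\<dots> = (\<Sum>u\<in>supp ?m'. if u = word_star w0 then ?m' u * m w0 else 0)"
    using fin w0(1) by (intro sum.cong HOL.refl) (simp add: sum.delta)
  also have "\<dots> = ?m' (word_star w0) * m w0"
    using fin w0(1) by (simp add: sum.delta supp_coeffs_star)
  finally show ?thesis by (simp add: coeffs_star_def)
qed

theorem coeffs_dstar_mult_longest:
  assumes "\<not> d_scalar sA sB x"
  obtains n z where "n \<ge> 1" and "length z = 2 * n" and "\<forall>w\<in>supp (coeffs x). length w \<le> n"
    and "coeffs (Mul (dstar \<phi> x) x) z \<noteq> 0"
proof -
  let ?m = "coeffs x"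
  have fin: "finite (supp ?m)" using fin_reduced_coeffs by (simp add: fin_reduced_def)
  have "\<not> supp ?m \<subseteq> {[]}" using assms d_scalar_if_supp_coeffs by blast
  then obtain w1 where w1: "w1 \<in> supp ?m" "w1 \<noteq> []" by blast
  define n where "n = Max (length ` supp ?m)"
  have longest: "\<forall>w\<in>supp ?m. length w \<le> n" using fin by (simp add: n_def)
  have "n \<in> length ` supp ?m" using fin w1 unfolding n_def by (intro Max_in) auto
  then obtain w0 where w0: "w0 \<in> supp ?m" and "length w0 = n" by blast
  then have "w0 \<noteq> []" using longest w1 by (cases w1) auto
  have "dstar \<phi> x \<approx> term_of (coeffs_star ?m)"
    using dstar_fcong[OF fcong_term_of_coeffs] dstar_term_of[OF fin_reduced_coeffs] fcong.trans by blast
  then have "coeffs (Mul (dstar \<phi> x) x) = op_of (term_of (coeffs_star ?m)) ?m"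
    using op_of_fcong fin_reduced_coeffs by simp
  then have "coeffs (Mul (dstar \<phi> x) x) (word_star w0 @ w0) = cnj (?m w0) * ?m w0"
    using op_of_term_of_coeffs_star_longest[OF fin_reduced_coeffs w0 \<open>w0 \<noteq> []\<close>] longest
      \<open>length w0 = n\<close> by simp
  also have "\<dots> \<noteq> 0" using w0 by (simp add: supp_def)
  finally show ?thesis
    using that[of n "word_star w0 @ w0"] longest \<open>w0 \<noteq> []\<close> \<open>length w0 = n\<close> by (cases w0) auto
qed

lemma d_scalar_if_d_projection: "d_projection sA sB \<phi> x \<Longrightarrow> d_scalar sA sB x"
proof (rule ccontr)
  assume proj: "d_projection sA sB \<phi> x" and "\<not> d_scalar sA sB x"
  then obtain n z where "n \<ge> 1" "length z = 2 * n" "\<forall>w\<in>supp (coeffs x). length w \<le> n"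
    and nonzero: "coeffs (Mul (dstar \<phi> x) x) z \<noteq> 0"
    using coeffs_dstar_mult_longest[OF \<open>\<not> d_scalar sA sB x\<close>] by blast
  have "coeffs (Mul (dstar \<phi> x) x) = coeffs (Mul x x)"
    using proj by (simp add: op_of_fcong fin_reduced_coeffs d_projection_def)
  also have "\<dots> = coeffs x" using proj by (intro op_of_fcong fin_reduced_delta) (simp_all add: d_projection_def)
  finally have "z \<in> supp (coeffs x)" using nonzero by (simp add: supp_def)
  then show False using \<open>n \<ge> 1\<close> \<open>length z = 2 * n\<close> \<open>\<forall>w\<in>supp (coeffs x). length w \<le> n\<close> by fastforce
qed

lemma d_scalar_if_dstar_mult_scalar: "d_scalar sA sB (Mul (dstar \<phi> x) x) \<Longrightarrow> d_scalar sA sB x"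
proof (rule ccontr)
  assume "d_scalar sA sB (Mul (dstar \<phi> x) x)" and "\<not> d_scalar sA sB x"
  then obtain c where "Mul (dstar \<phi> x) x \<approx> Smul c One" by (auto simp: d_scalar_def)
  then have "coeffs (Mul (dstar \<phi> x) x) = coeffs (Smul c One)" by (intro op_of_fcong fin_reduced_delta) simp_all
  moreover obtain n z where "n \<ge> 1" "length z = 2 * n" "coeffs (Mul (dstar \<phi> x) x) z \<noteq> 0"
    using coeffs_dstar_mult_longest[OF \<open>\<not> d_scalar sA sB x\<close>] by blast
  ultimately show False by (auto simp: delta_def split: if_splits)
qed

end

theorem corollary1:
  fixes sA :: "complex \<Rightarrow> 'a::{ring,monoid_mult} \<Rightarrow> 'a"
    and sB :: "complex \<Rightarrow> 'b::{ring,monoid_mult} \<Rightarrow> 'b"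
    and \<phi> :: "'a \<Rightarrow> 'b"
  assumes "cplx_alg sA" and "cplx_alg sB" and "anti_iso sA sB \<phi>"
  shows "\<forall>x :: ('a, 'b) fterm.
           (d_unitary sA sB \<phi> x \<longrightarrow> d_scalar sA sB x) \<and>
           (d_projection sA sB \<phi> x \<longrightarrow> d_scalar sA sB x) \<and>
           (d_partial_isometry sA sB \<phi> x \<longrightarrow> d_scalar sA sB x)"
proof (cases "(1::'a) = 0")
  case True
  then show ?thesis using free_product.d_scalar_if_one_eq_zero by blast
next
  case False
  have "vector_space sA" using assms(1) unfolding cplx_alg_def by unfold_locales auto
  then interpret star_double sA sB \<phi>
    using assms(1,3) False by (intro star_double.intro star_double_axioms.intro)
  show ?thesis
  proof (intro allI conjI impI)
    fix x assume "d_unitary sA sB \<phi> x"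
    then have "Mul (dstar \<phi> x) x \<approx> One" by (simp add: d_unitary_def)
    then have "Mul (dstar \<phi> x) x \<approx> Smul 1 One" by (rule fcong.trans[OF _ fcong.sym[OF fcong.smul_one]])
    then have "d_scalar sA sB (Mul (dstar \<phi> x) x)" by (auto simp: d_scalar_def)
    then show "d_scalar sA sB x" by (rule d_scalar_if_dstar_mult_scalar)
  next
    fix x assume "d_projection sA sB \<phi> x"
    then show "d_scalar sA sB x" by (rule d_scalar_if_d_projection)
  next
    fix x assume "d_partial_isometry sA sB \<phi> x"
    then show "d_scalar sA sB x"
      unfolding d_partial_isometry_def by (rule d_scalar_if_dstar_mult_scalar[OF d_scalar_if_d_projection])
  qed
qed

end
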